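(* Let $d\ge2$ and let $\mu$ be a continuous polynomial martingale on $\Delta^d$ with diffusion matrix $c^\mu_{ii}=\sum_{j\ne i}\gamma^\mu_{ij}\mu^i\mu^j$, $c^\mu_{ij}=-\gamma^\mu_{ij}\mu^i\mu^j$ ($i\ne j$), where $\gamma^\mu\in\mathbb{S}^d$ has zero diagonal and $\gamma^\mu_{ij}>0$ for all $i\ne j$ (i.e. $\mu$ is described by the admissible simplex parameter set $(0,0,\gamma^\mu)$). Then for every $T>0$, every $k\in\{1,\dots,d\}$ and every $\mu_0\in\mathring{\Delta}^d$, with positive probability $\mu^k_t=0$ for some $t\le T$.
   Context: $\Delta^d=\{x\in[0,1]^d:\sum_ix_i=1\}$, $\mathring{\Delta}^d$ its interior. A continuous polynomial martingale on $\Delta^d$ here means a polynomial diffusion (time-homogeneous Markovian Itô semimartingale with continuous paths) on $\Delta^d$ with zero drift and the stated quadratic diffusion matrix, i.e. the solution of the corresponding well-posed martingale problem. *)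

theory Defs
  imports "HOL-Probability.Probability"
begin

text \<open>The closed unit simplex in R^d (coordinates indexed by the finite type 'n, d = CARD('n)).\<close>
definition unit_simplex :: "(real ^ 'n) set" where
  "unit_simplex = {x. (\<forall>i. 0 \<le> x $ i) \<and> (\<Sum>i\<in>UNIV. x $ i) = 1}"

definition unit_simplex_interior :: "(real ^ 'n) set" where
  "unit_simplex_interior = {x. (\<forall>i. 0 < x $ i) \<and> (\<Sum>i\<in>UNIV. x $ i) = 1}"

definition is_filtration :: "'a measure \<Rightarrow> (real \<Rightarrow> 'a measure) \<Rightarrow> bool" where
  "is_filtration M F \<longleftrightarrow>
     (\<forall>t. subalgebra M (F t)) \<and>
     (\<forall>s t. 0 \<le> s \<longrightarrow> s \<le> t \<longrightarrow> sets (F s) \<subseteq> sets (F t))"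

definition is_martingale :: "'a measure \<Rightarrow> (real \<Rightarrow> 'a measure) \<Rightarrow> (real \<Rightarrow> 'a \<Rightarrow> real) \<Rightarrow> bool" where
  "is_martingale M F Y \<longleftrightarrow>
     (\<forall>t\<ge>0. integrable M (Y t) \<and> Y t \<in> borel_measurable (F t)) \<and>
     (\<forall>s t. 0 \<le> s \<longrightarrow> s \<le> t \<longrightarrow>
        (\<forall>A\<in>sets (F s). (LINT \<omega>:A|M. Y t \<omega>) = (LINT \<omega>:A|M. Y s \<omega>)))"

definition simplex_diffusion :: "('n \<Rightarrow> 'n \<Rightarrow> real) \<Rightarrow> real ^ 'n \<Rightarrow> 'n \<Rightarrow> 'n \<Rightarrow> real" where
  "simplex_diffusion \<gamma> x i j =
     (if i = j then (\<Sum>l\<in>UNIV - {i}. \<gamma> i l * x $ i * x $ l)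
      else - \<gamma> i j * x $ i * x $ j)"

text \<open>Since X is bounded and continuous, this is exactly: X is a continuous (local) martingale
  with quadratic covariation d<X^i,X^j>_t = c_ij(X_t) dt.\<close>
definition is_simplex_diffusion_martingale ::
  "'a measure \<Rightarrow> (real \<Rightarrow> 'a measure) \<Rightarrow> ('n \<Rightarrow> 'n \<Rightarrow> real) \<Rightarrow> (real \<Rightarrow> 'a \<Rightarrow> real ^ 'n) \<Rightarrow> bool" where
  "is_simplex_diffusion_martingale M F \<gamma> X \<longleftrightarrow>
     prob_space M \<and> is_filtration M F \<and>
     (\<forall>t\<ge>0. X t \<in> borel_measurable (F t)) \<and>
     (\<forall>\<omega>\<in>space M. continuous_on {0..} (\<lambda>t. X t \<omega>)) \<and>
     (\<forall>\<omega>\<in>space M. \<forall>t\<ge>0. X t \<omega> \<in> unit_simplex) \<and>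
     (\<forall>i. is_martingale M F (\<lambda>t \<omega>. X t \<omega> $ i)) \<and>
     (\<forall>i j. is_martingale M F
        (\<lambda>t \<omega>. X t \<omega> $ i * X t \<omega> $ j - integral {0..t} (\<lambda>s. simplex_diffusion \<gamma> (X s \<omega>) i j)))"

end

theory Submission
  imports Defs
begin

text \<open>
  Fix a coordinate k and write Y = X^k. Then Y is a continuous martingale with values in [0,1],
  Y_0 = y0 in (0,1), and Y^2 - A is a martingale for a compensator A growing at least at rate
  g Y (1 - Y), where g = min_{l \<noteq> k} \<gamma>_kl > 0.

  We bound the Laplace transform E exp(-\<lambda> Y_\<tau>) from below uniformly in \<lambda>; letting
  \<lambda> \<rightarrow> \<infinity> then gives P(Y_\<tau> = 0) > 0. Along \<theta>(t) = 1 / (1/\<lambda> + c (\<tau> - t)), which solves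
  \<theta>' = c \<theta>^2 with \<theta>(\<tau>) = \<lambda>, the process exp(-\<theta>(t) Y_t) is a submartingale away from
  Y \<approx> 1: the second-order term \<theta>^2/2 dA \<ge> \<theta>^2/2 g Y (1 - Y) dt pays for the growth of \<theta>.
  Without stochastic calculus this is done on a grid of mesh \<tau>/n: the martingale identities and a
  cubic Taylor bound for exp give the one-step inequality up to errors controlled by the
  oscillation of Y on the grid cells and by \<Sum> |\<Delta>Y|^3 \<le> max |\<Delta>Y| \<Sum> \<Delta>Y^2, where
  E (\<Sum> \<Delta>Y^2)^2 \<le> 3. Both errors vanish as n \<rightarrow> \<infinity> by continuity of the paths. For small \<tau>
  the loss near Y \<approx> 1 is at most half of exp(-\<theta>(0) y0), which stays away from 0 as \<lambda> \<rightarrow> \<infinity>.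
\<close>

section \<open>Elementary inequalities\<close>

lemma exp_ge_cubic_Taylor:
  fixes x :: real
  shows "1 + x + x^2/2 - \<bar>x\<bar>^3/6 \<le> exp x"
proof -
  obtain t where "exp x = (\<Sum>m<4. x ^ m / fact m) + exp t / fact 4 * x ^ 4"
    using Maclaurin_exp_le[of x 4] by blast
  moreover have "(\<Sum>m<4. x ^ m / fact m) = 1 + x + x^2/2 + x^3/6"
    by (simp add: numeral_eq_Suc lessThan_Suc fact_numeral)
  moreover have "0 \<le> exp t / fact 4 * x ^ 4" by (simp add: zero_le_even_power')
  moreover have "- (\<bar>x\<bar>^3/6) \<le> x^3/6"
    by (cases "x \<ge> 0") (auto simp: abs_if power3_eq_cube)
  ultimately show ?thesis by linarith
qed

lemma exp_mult_le_chord: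
  fixes y \<eta> :: real
  assumes "0 \<le> y" "y \<le> 1"
  shows "exp (\<eta> * y) \<le> 1 + (exp \<eta> - 1) * y"
  using convex_onD[OF exp_convex, of y 0 \<eta>] assms by (simp add: algebra_simps)

lemma exp_minus_one_le_double:
  fixes \<eta> :: real
  assumes "0 \<le> \<eta>" "\<eta> \<le> 1"
  shows "exp \<eta> - 1 \<le> 2 * \<eta>"
proof -
  have "\<eta> * exp 1 \<le> \<eta> * 3" using exp_le assms by (intro mult_left_mono) auto
  then show ?thesis using exp_mult_le_chord[of \<eta> 1] assms by (simp add: algebra_simps)
qed

text \<open>Raising the exponent from \<theta> to \<theta> + \<eta> is paid for by the factor 1 + \<kappa> y (1 - y) where
  y \<le> a, and by the linear penalty where y > a.\<close>

lemma exp_raise_exponent_bound: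
  fixes y \<theta> \<eta> a \<kappa> :: real
  assumes y: "0 \<le> y" "y \<le> 1" and \<theta>: "0 \<le> \<theta>" and \<eta>: "0 \<le> \<eta>" and a: "0 < a" "a < 1"
    and \<kappa>: "0 \<le> \<kappa>" and cost: "exp \<eta> - 1 \<le> \<kappa> * (1 - a)"
  shows "exp (-\<theta>*y) - \<eta>*exp (-\<theta>*a)*y \<le> exp (-(\<theta>+\<eta>)*y) * (1 + \<kappa> * (y*(1-y)))"
proof (cases "y \<le> a")
  case True
  have "exp (\<eta>*y) \<le> 1 + (exp \<eta> - 1) * y" by (rule exp_mult_le_chord[OF y])
  also have "\<dots> \<le> 1 + \<kappa> * (1-a) * y" using cost y by (simp add: mult_right_mono)
  also have "\<dots> \<le> 1 + \<kappa> * (y*(1-y))"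
    using True y \<kappa> by (simp add: mult_left_mono algebra_simps mult_right_mono)
  finally have gain: "exp (\<eta>*y) \<le> 1 + \<kappa> * (y*(1-y))" .
  have "exp (-\<theta>*y) = exp (-(\<theta>+\<eta>)*y) * exp (\<eta>*y)"
    by (simp add: exp_add[symmetric] algebra_simps)
  also have "\<dots> \<le> exp (-(\<theta>+\<eta>)*y) * (1 + \<kappa> * (y*(1-y)))"
    using gain by (simp add: mult_left_mono)
  finally have "exp (-\<theta>*y) \<le> exp (-(\<theta>+\<eta>)*y) * (1 + \<kappa> * (y*(1-y)))" .
  moreover have "0 \<le> \<eta>*exp (-\<theta>*a)*y" using \<eta> y by simp
  ultimately show ?thesis by linarith
next
  case False
  have "exp (-\<theta>*y) - \<eta>*exp (-\<theta>*a)*y \<le> exp (-\<theta>*y) - \<eta>*exp (-\<theta>*y)*y"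
    using False \<theta> \<eta> y by (simp add: mult_left_mono mult_right_mono)
  also have "\<dots> = exp (-\<theta>*y) * (1 - \<eta>*y)" by (simp add: algebra_simps)
  also have "\<dots> \<le> exp (-\<theta>*y) * exp (-\<eta>*y)"
    using exp_ge_add_one_self[of "-\<eta>*y"] by (simp add: mult_left_mono)
  also have "\<dots> = exp (-(\<theta>+\<eta>)*y)" by (simp add: exp_add[symmetric] algebra_simps)
  also have "\<dots> \<le> exp (-(\<theta>+\<eta>)*y) * (1 + \<kappa> * (y*(1-y)))"
    using \<kappa> y by simp
  finally show ?thesis .
qed

lemma mult_exp_le_exp_diff:
  fixes \<eta> a \<theta> :: real
  assumes "0 \<le> \<eta>" "0 < a" "a * \<eta> \<le> 1"
  shows "\<eta> * exp (-a*\<theta>) \<le> 3/a * (exp (-a*\<theta>) - exp (-a*(\<theta>+\<eta>)))"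
proof -
  define x where "x = a*\<eta>"
  have x: "0 \<le> x" "x \<le> 1" using assms unfolding x_def by auto
  have "(1 + x) * exp (-x) \<le> exp x * exp (-x)" by (rule mult_right_mono) auto
  hence "x * exp (-x) \<le> 1 - exp (-x)" by (simp add: exp_minus_inverse algebra_simps)
  moreover have "1/3 \<le> exp (-x)"
  proof -
    have "(1/3::real) \<le> exp (-1)" using exp_le by (simp add: exp_minus field_simps)
    also have "\<dots> \<le> exp (-x)" using x by simp
    finally show ?thesis .
  qed
  hence "x * (1/3) \<le> x * exp (-x)" using x by (intro mult_left_mono) auto
  ultimately have "x/3 \<le> 1 - exp (-x)" by simp
  hence "x/3 * exp (-a*\<theta>) \<le> (1 - exp (-x)) * exp (-a*\<theta>)" by (simp add: mult_right_mono)
  also have "\<dots> = exp (-a*\<theta>) - exp (-a*(\<theta>+\<eta>))"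
    unfolding x_def by (simp add: algebra_simps exp_add[symmetric])
  finally show ?thesis using assms unfolding x_def by (simp add: field_simps)
qed

text \<open>A Riemann sum for \<integral> exp(-a \<theta>) d\<theta>.\<close>

lemma sum_increments_mult_exp_le:
  fixes \<theta> :: "nat \<Rightarrow> real" and a :: real
  assumes a: "0 < a" and incr: "\<And>i. i < n \<Longrightarrow> \<theta> i \<le> \<theta> (Suc i) \<and> a * (\<theta> (Suc i) - \<theta> i) \<le> 1"
  shows "(\<Sum>i<n. (\<theta> (Suc i) - \<theta> i) * exp (-a * \<theta> i)) \<le> 3/a * exp (-a * \<theta> 0)"
proof -
  have "(\<Sum>i<n. (\<theta> (Suc i) - \<theta> i) * exp (-a * \<theta> i))
      \<le> (\<Sum>i<n. 3/a * (exp (-a*\<theta> i) - exp (-a*\<theta> (Suc i))))"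
  proof (rule sum_mono)
    fix i assume "i \<in> {..<n}"
    then show "(\<theta> (Suc i) - \<theta> i) * exp (-a * \<theta> i) \<le> 3/a * (exp (-a*\<theta> i) - exp (-a*\<theta> (Suc i)))"
      using mult_exp_le_exp_diff[OF _ a, of "\<theta> (Suc i) - \<theta> i" "\<theta> i"] incr[of i] by simp
  qed
  also have "\<dots> = 3/a * (exp (-a*\<theta> 0) - exp (-a*\<theta> n))"
    by (simp only: sum_distrib_left[symmetric] sum_lessThan_telescope'[where f="\<lambda>i. exp (-a*\<theta> i)"])
  also have "\<dots> \<le> 3/a * exp (-a * \<theta> 0)" using a by (intro mult_left_mono) auto
  finally show ?thesis .
qed

lemma mult_le_square_div_add:
  fixes K m S :: real
  assumes K: "0 < K" and m: "0 \<le> m" "m \<le> 1"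
  shows "m * S \<le> S^2 / K + K * m / 4"
proof -
  have "0 \<le> (S - K/2)^2 / K" using K by simp
  hence "S \<le> S^2/K + K/4" using K by (simp add: power2_eq_square field_simps)
  hence "m * S \<le> m * (S^2/K + K/4)" using m(1) by (rule mult_left_mono)
  hence "m * S \<le> m * (S^2/K) + K*m/4" by (simp add: algebra_simps)
  also have "m * (S^2/K) \<le> S^2/K" using m K by (intro mult_left_le_one_le) auto
  finally show ?thesis by simp
qed

lemma sum_abs_cube_le:
  fixes d :: "nat \<Rightarrow> real" and m K :: real
  assumes d: "\<And>i. i < n \<Longrightarrow> \<bar>d i\<bar> \<le> m" and m: "0 \<le> m" "m \<le> 1" and K: "0 < K"
  shows "(\<Sum>i<n. \<bar>d i\<bar>^3) \<le> (\<Sum>i<n. (d i)^2)^2 / K + K * m / 4"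
proof -
  have "(\<Sum>i<n. \<bar>d i\<bar>^3) \<le> (\<Sum>i<n. m * (d i)^2)"
  proof (rule sum_mono)
    fix i assume "i \<in> {..<n}"
    then have "\<bar>d i\<bar> * \<bar>d i\<bar>^2 \<le> m * \<bar>d i\<bar>^2" using d by (intro mult_right_mono) auto
    then show "\<bar>d i\<bar>^3 \<le> m * (d i)^2" by (simp add: power3_eq_cube power2_eq_square)
  qed
  also have "\<dots> = m * (\<Sum>i<n. (d i)^2)" by (simp add: sum_distrib_left)
  also have "\<dots> \<le> (\<Sum>i<n. (d i)^2)^2 / K + K * m / 4" by (rule mult_le_square_div_add[OF K m])
  finally show ?thesis .
qed

lemma square_sum_lessThan:
  fixes x :: "nat \<Rightarrow> real"
  shows "(\<Sum>i<n. x i)^2 = (\<Sum>i<n. x i * (x i + 2 * (\<Sum>j\<in>{Suc i..<n}. x j)))"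
proof (induction n)
  case 0 then show ?case by simp
next
  case (Suc n)
  have tail: "(\<Sum>j\<in>{Suc i..<Suc n}. x j) = (\<Sum>j\<in>{Suc i..<n}. x j) + x n" if "i < n" for i
    using that by (simp add: sum.atLeastLessThan_Suc)
  have "(\<Sum>i<Suc n. x i * (x i + 2 * (\<Sum>j\<in>{Suc i..<Suc n}. x j)))
      = (\<Sum>i<n. x i * (x i + 2 * (\<Sum>j\<in>{Suc i..<n}. x j))) + 2 * (\<Sum>i<n. x i) * x n + x n * x n"
    by (simp add: tail algebra_simps sum.distrib sum_distrib_left sum_distrib_right)
  then show ?case using Suc by (simp add: power2_eq_square algebra_simps)
qed

lemma telescoping_lower_bound:
  fixes u r :: "nat \<Rightarrow> real"
  assumes "\<And>i. i < n \<Longrightarrow> u i - r i \<le> u (Suc i)"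
  shows "u 0 - (\<Sum>i<n. r i) \<le> u n"
  using assms
proof (induction n)
  case (Suc n)
  then have "u 0 - (\<Sum>i<n. r i) \<le> u n" "u n - r n \<le> u (Suc n)" by auto
  then show ?case by simp
qed simp

lemma continuous_on_le_if_le_on_rationals:
  fixes f :: "real \<Rightarrow> real"
  assumes st: "s < t" and f: "continuous_on {s..t} f"
    and le: "\<And>q. q \<in> {s..t} \<inter> \<rat> \<Longrightarrow> f q \<le> B" and r: "r \<in> {s..t}"
  shows "f r \<le> B"
proof -
  let ?S = "{s..t} \<inter> \<rat>"
  have "{s<..<t} \<subseteq> closure ({s<..<t} \<inter> \<rat>)"
    using open_Int_closure_subset[of "{s<..<t}" \<rat>] by (simp add: Rats_closure_real)
  also have "\<dots> \<subseteq> closure ?S" by (rule closure_mono) auto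
  finally have "closure {s<..<t} \<subseteq> closure ?S" by (metis closure_closure closure_mono)
  hence r_closure: "r \<in> closure ?S" using r st by auto
  have "closure ?S \<subseteq> {s..t}" by (metis closure_closed closed_atLeastAtMost closure_mono inf_le1)
  hence "continuous_on (closure ?S) f" using f continuous_on_subset by blast
  then show ?thesis by (rule continuous_le_on_closure[OF _ r_closure]) (rule le)
qed

text \<open>With ys = Y_s, yt = Y_t and dA = A_t - A_s the left side has mean zero by the martingale
  identities, so the right side has nonnegative mean.\<close>

lemma exp_increment_second_order_lower:
  fixes \<theta> ys yt dA \<delta> c :: real
  assumes \<theta>: "0 \<le> \<theta>" and ys: "0 \<le> ys" and c: "0 \<le> c" and \<delta>: "0 \<le> \<delta>"
    and dA: "c * (ys * (1 - ys) - \<delta>) \<le> \<theta>^2/2 * dA"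
  defines "h \<equiv> exp (-\<theta> * ys)"
  shows "- \<theta> * (h * (yt - ys)) + \<theta>^2/2 * (h * (yt - ys)^2 - h * dA)
      \<le> exp (-\<theta> * yt) - h * (1 + c * (ys * (1 - ys))) + c * \<delta> + \<theta>^3/6 * \<bar>yt - ys\<bar>^3"
proof -
  define d where "d = yt - ys"
  define x where "x = -\<theta> * d"
  have h: "0 \<le> h" "h \<le> 1" unfolding h_def using \<theta> ys by auto
  have "h * (1 + x + x^2/2 - \<bar>x\<bar>^3/6) \<le> h * exp x"
    using exp_ge_cubic_Taylor h(1) by (rule mult_left_mono)
  moreover have "h * exp x = exp (-\<theta> * yt)"
    unfolding x_def d_def h_def by (simp flip: exp_add) (simp add: algebra_simps)
  moreover have "h * (\<bar>x\<bar>^3/6) \<le> \<bar>x\<bar>^3/6" using h by (intro mult_left_le_one_le) auto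
  moreover have "\<bar>x\<bar>^3 = \<theta>^3 * \<bar>d\<bar>^3" unfolding x_def using \<theta> by (simp add: abs_mult power_mult_distrib)
  moreover have "h * (1 + x + x^2/2 - \<bar>x\<bar>^3/6) = h - \<theta> * (h * d) + \<theta>^2/2 * (h * d^2) - h * (\<bar>x\<bar>^3/6)"
    unfolding x_def by (simp add: algebra_simps power2_eq_square)
  ultimately have taylor: "h - \<theta> * (h * d) + \<theta>^2/2 * (h * d^2) - \<theta>^3/6 * \<bar>d\<bar>^3 \<le> exp (-\<theta> * yt)"
    by linarith
  have "h * (c * (ys * (1 - ys) - \<delta>)) \<le> h * (\<theta>^2/2 * dA)" using dA h(1) by (rule mult_left_mono)
  moreover have "h * (c * \<delta>) \<le> c * \<delta>" using h c \<delta> by (intro mult_left_le_one_le) auto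
  ultimately have "c * (h * (ys * (1 - ys))) - c * \<delta> \<le> \<theta>^2/2 * (h * dA)"
    by (simp add: algebra_simps)
  moreover have "\<theta>^2/2 * (h * d^2 - h * dA) = \<theta>^2/2 * (h * d^2) - \<theta>^2/2 * (h * dA)"
    by (simp add: right_diff_distrib)
  moreover have "h * (1 + c * (ys * (1 - ys))) = h + c * (h * (ys * (1 - ys)))"
    by (simp add: algebra_simps)
  ultimately show ?thesis using taylor unfolding d_def by linarith
qed

lemma exp_penalty_le_half:
  fixes y0 a b \<Theta> \<theta> :: real
  assumes y0: "0 < y0" "y0 < b" and ab: "b < a" "a < 1" and \<Theta>: "3 \<le> (b - y0) * \<Theta>"
    and \<theta>: "b * \<Theta> / a \<le> \<theta>" "\<theta> \<le> \<Theta>"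
  shows "exp (-\<Theta> * y0) / 2 \<le> exp (-\<theta> * y0) - y0 * (3/a) * exp (-a * \<theta>)"
proof -
  have a: "0 < a" using y0 ab by linarith
  have "6 * y0 / a \<le> 6" using y0 ab a by (simp add: field_simps)
  also have "6 \<le> exp (3::real)" using exp_lower_Taylor_quadratic[of 3] by simp
  also have "\<dots> \<le> exp ((b - y0) * \<Theta>)" using \<Theta> by simp
  finally have "6 * y0 / a \<le> exp ((b - y0) * \<Theta>)" .
  then have "6 * y0 / a * exp (-b * \<Theta>) \<le> exp ((b - y0) * \<Theta>) * exp (-b * \<Theta>)" by (rule mult_right_mono) simp
  also have "\<dots> = exp (-\<Theta> * y0)" by (simp flip: exp_add) (simp add: algebra_simps)
  finally have "y0 * (3/a) * exp (-b * \<Theta>) \<le> exp (-\<Theta> * y0) / 2" by (simp add: field_simps)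
  moreover have "y0 * (3/a) * exp (-a * \<theta>) \<le> y0 * (3/a) * exp (-b * \<Theta>)"
    using \<theta>(1) y0 a by (intro mult_left_mono) (auto simp: field_simps)
  moreover have "exp (-\<Theta> * y0) \<le> exp (-\<theta> * y0)" using \<theta>(2) y0 by (simp add: mult_right_mono)
  ultimately show ?thesis by linarith
qed

section \<open>The grid and the discretised Riccati exponent\<close>

definition grid :: "real \<Rightarrow> nat \<Rightarrow> nat \<Rightarrow> real" where
  "grid \<tau> n i = real i * \<tau> / real n"

text \<open>\<theta>(t) = 1 / (1/lam + c (\<tau> - t)) solves \<theta>' = c \<theta>^2 with \<theta>(\<tau>) = lam.\<close>

definition riccati_grid :: "real \<Rightarrow> real \<Rightarrow> real \<Rightarrow> nat \<Rightarrow> nat \<Rightarrow> real" where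
  "riccati_grid lam c \<tau> n i = 1 / (1/lam + c * (\<tau> - grid \<tau> n i))"

lemma grid_nonneg: "0 \<le> \<tau> \<Longrightarrow> 0 \<le> grid \<tau> n i"
  unfolding grid_def by simp

lemma grid_Suc_diff: "grid \<tau> n (Suc i) - grid \<tau> n i = \<tau> / n"
  unfolding grid_def by (simp add: diff_divide_distrib[symmetric] algebra_simps)

lemma grid_le_Suc: "0 \<le> \<tau> \<Longrightarrow> grid \<tau> n i \<le> grid \<tau> n (Suc i)"
  using grid_Suc_diff[of \<tau> n i] by (smt (verit) divide_nonneg_nonneg of_nat_0_le_iff)

lemma grid_le:
  assumes "0 \<le> \<tau>" "i \<le> n"
  shows "grid \<tau> n i \<le> \<tau>"
proof (cases "n = 0")
  case False
  have "real i * \<tau> \<le> real n * \<tau>" using assms by (intro mult_right_mono) auto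
  then show ?thesis unfolding grid_def using False by (simp add: field_simps)
qed (use assms in \<open>simp add: grid_def\<close>)

lemma grid_0 [simp]: "grid \<tau> n 0 = 0" and grid_self: "0 < n \<Longrightarrow> grid \<tau> n n = \<tau>"
  unfolding grid_def by auto

context
  fixes lam c \<tau> :: real and n :: nat
  assumes lam: "0 < lam" and c: "0 < c" and \<tau>: "0 \<le> \<tau>"
begin

lemma riccati_grid_denominator_pos: "i \<le> n \<Longrightarrow> 0 < 1/lam + c * (\<tau> - grid \<tau> n i)"
  using grid_le[OF \<tau>, of i n] lam c by (simp add: add_pos_nonneg)

lemma riccati_grid_pos: "i \<le> n \<Longrightarrow> 0 < riccati_grid lam c \<tau> n i"
  unfolding riccati_grid_def using riccati_grid_denominator_pos by simp

lemma riccati_grid_le: "i \<le> n \<Longrightarrow> riccati_grid lam c \<tau> n i \<le> lam"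
  unfolding riccati_grid_def
  using frac_le[of 1 1 "1/lam" "1/lam + c * (\<tau> - grid \<tau> n i)"] grid_le[OF \<tau>, of i n] lam c by simp

lemma riccati_grid_self: "0 < n \<Longrightarrow> riccati_grid lam c \<tau> n n = lam"
  unfolding riccati_grid_def using grid_self by simp

lemma riccati_grid_Suc_diff:
  assumes "i < n"
  shows "riccati_grid lam c \<tau> n (Suc i) - riccati_grid lam c \<tau> n i
    = c * (\<tau> / n) * riccati_grid lam c \<tau> n i * riccati_grid lam c \<tau> n (Suc i)"
proof -
  define d0 where "d0 = 1/lam + c * (\<tau> - grid \<tau> n i)"
  define d1 where "d1 = 1/lam + c * (\<tau> - grid \<tau> n (Suc i))"
  have "0 < d0" "0 < d1" unfolding d0_def d1_def using assms riccati_grid_denominator_pos by auto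
  moreover have "d0 - d1 = c * (\<tau> / n)"
    unfolding d0_def d1_def using grid_Suc_diff[of \<tau> n i] by (simp add: algebra_simps)
  ultimately show ?thesis
    unfolding riccati_grid_def d0_def[symmetric] d1_def[symmetric] by (simp add: field_simps)
qed

lemma riccati_grid_increment_bounds:
  assumes "i < n"
  shows "0 \<le> riccati_grid lam c \<tau> n (Suc i) - riccati_grid lam c \<tau> n i"
    and "riccati_grid lam c \<tau> n (Suc i) - riccati_grid lam c \<tau> n i \<le> c * (\<tau> / n) * lam^2"
proof -
  let ?\<theta> = "riccati_grid lam c \<tau> n"
  have pos: "0 < ?\<theta> i" "0 < ?\<theta> (Suc i)" and le: "?\<theta> i \<le> lam" "?\<theta> (Suc i) \<le> lam"
    using assms riccati_grid_pos riccati_grid_le by auto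
  have step: "0 \<le> c * (\<tau> / n)" using c \<tau> by simp
  show "0 \<le> ?\<theta> (Suc i) - ?\<theta> i"
    unfolding riccati_grid_Suc_diff[OF assms] using c \<tau> pos by (intro mult_nonneg_nonneg) auto
  have "?\<theta> i * ?\<theta> (Suc i) \<le> lam^2" using pos le by (simp add: power2_eq_square mult_mono)
  then show "?\<theta> (Suc i) - ?\<theta> i \<le> c * (\<tau> / n) * lam^2"
    unfolding riccati_grid_Suc_diff[OF assms] using mult_left_mono[OF _ step] by (simp add: mult.assoc)
qed

lemma riccati_grid_exp_increment_le:
  assumes i: "i < n" and fine: "c * (\<tau> / n) * lam^2 \<le> 1"
  shows "exp (riccati_grid lam c \<tau> n (Suc i) - riccati_grid lam c \<tau> n i) - 1
    \<le> 2 * c * (\<tau> / n) * riccati_grid lam c \<tau> n (Suc i)^2"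
proof -
  let ?\<theta> = "riccati_grid lam c \<tau> n"
  have "exp (?\<theta> (Suc i) - ?\<theta> i) - 1 \<le> 2 * (?\<theta> (Suc i) - ?\<theta> i)"
    using riccati_grid_increment_bounds[OF i] fine by (intro exp_minus_one_le_double) auto
  also have "\<dots> = 2 * c * (\<tau> / n) * ?\<theta> i * ?\<theta> (Suc i)"
    unfolding riccati_grid_Suc_diff[OF i] by simp
  also have "\<dots> \<le> 2 * c * (\<tau> / n) * ?\<theta> (Suc i) * ?\<theta> (Suc i)"
    using riccati_grid_increment_bounds(1)[OF i] riccati_grid_pos[of "Suc i"] i c \<tau>
    by (intro mult_right_mono mult_left_mono) auto
  finally show ?thesis by (simp add: power2_eq_square mult.assoc)
qed

end

section \<open>Measure-theoretic preliminaries\<close>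

lemma integrable_bounded_mult:
  fixes h g :: "'a \<Rightarrow> real"
  assumes g: "integrable M g" and h: "h \<in> borel_measurable M" and bound: "\<And>x. x \<in> space M \<Longrightarrow> \<bar>h x\<bar> \<le> B"
  shows "integrable M (\<lambda>x. h x * g x)"
proof (rule Bochner_Integration.integrable_bound)
  show "integrable M (\<lambda>x. B * g x)" using g by simp
  show "(\<lambda>x. h x * g x) \<in> borel_measurable M"
    using h borel_measurable_integrable[OF g] by measurable
  show "AE x in M. norm (h x * g x) \<le> norm (B * g x)"
    using bound by (intro AE_I2) (force simp: abs_mult intro!: mult_right_mono)
qed

lemma martingale_integral_mult_eq:
  assumes "prob_space M" and filtration: "is_filtration M F" and Z: "is_martingale M F Z"
    and st: "0 \<le> s" "s \<le> t" and h: "h \<in> borel_measurable (F s)"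
    and bound: "\<And>x. x \<in> space M \<Longrightarrow> \<bar>h x\<bar> \<le> B"
  shows "(\<integral>x. h x * Z t x \<partial>M) = (\<integral>x. h x * Z s x \<partial>M)"
proof -
  interpret prob_space M by fact
  have sub: "subalgebra M (F s)" using filtration unfolding is_filtration_def by auto
  interpret finite_measure_subalgebra M "F s" by unfold_locales (rule sub)
  have Zt: "integrable M (Z t)" and Zs: "integrable M (Z s)" and Zs_F: "Z s \<in> borel_measurable (F s)"
    using Z st unfolding is_martingale_def by auto
  have hM: "h \<in> borel_measurable M" using measurable_from_subalg[OF sub h] .
  have "AE x in M. real_cond_exp M (F s) (Z t) x = Z s x"
    using Z st Zt Zs Zs_F unfolding is_martingale_def by (intro real_cond_exp_charact) blast+
  have "(\<integral>x. h x * Z t x \<partial>M) = (\<integral>x. h x * real_cond_exp M (F s) (Z t) x \<partial>M)"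
    using real_cond_exp_intg(2)[OF integrable_bounded_mult[OF Zt hM bound] h
        borel_measurable_integrable[OF Zt]] by simp
  also have "\<dots> = (\<integral>x. h x * Z s x \<partial>M)"
    using \<open>AE x in M. real_cond_exp M (F s) (Z t) x = Z s x\<close> hM Zs
    by (intro integral_cong_AE) (auto intro: borel_measurable_integrable)
  finally show ?thesis .
qed

lemma (in finite_measure) tendsto_integral_exp_neg_mult:
  fixes Z :: "'a \<Rightarrow> real"
  assumes Z[measurable]: "Z \<in> borel_measurable M" and nonneg: "\<And>\<omega>. \<omega> \<in> space M \<Longrightarrow> 0 \<le> Z \<omega>"
  shows "(\<lambda>j. \<integral>\<omega>. exp (- real j * Z \<omega>) \<partial>M) \<longlonglongrightarrow> measure M {\<omega> \<in> space M. Z \<omega> = 0}"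
proof -
  let ?S = "{\<omega> \<in> space M. Z \<omega> = 0}"
  have S: "?S \<in> sets M" by measurable
  have "(\<lambda>j. exp (- real j * Z \<omega>)) \<longlonglongrightarrow> indicator ?S \<omega>" if \<omega>: "\<omega> \<in> space M" for \<omega>
  proof (cases "Z \<omega> = 0")
    case False
    then have "0 < Z \<omega>" using nonneg[OF \<omega>] by simp
    then have "(\<lambda>j. exp (- Z \<omega>) ^ j) \<longlonglongrightarrow> 0" by (intro LIMSEQ_power_zero) simp
    then show ?thesis using False by (simp add: exp_of_nat_mult[symmetric] mult.commute)
  qed (use \<omega> in simp)
  then have "(\<lambda>j. \<integral>\<omega>. exp (- real j * Z \<omega>) \<partial>M) \<longlonglongrightarrow> (\<integral>\<omega>. indicator ?S \<omega> \<partial>M)"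
    using S nonneg by (intro integral_dominated_convergence[where w="\<lambda>_. 1"] AE_I2) auto
  then show ?thesis using S by simp
qed

section \<open>Martingales on [0,1] with a Wright--Fisher lower bound on the compensator\<close>

locale wright_fisher_type_martingale =
  fixes M :: "'a measure" and F :: "real \<Rightarrow> 'a measure" and Y A :: "real \<Rightarrow> 'a \<Rightarrow> real"
    and y0 g :: real
  assumes prob: "prob_space M" and filtration: "is_filtration M F"
    and martingale: "is_martingale M F Y"
    and compensated_square: "is_martingale M F (\<lambda>t \<omega>. Y t \<omega> * Y t \<omega> - A t \<omega>)"
    and range: "\<And>\<omega> t. \<omega> \<in> space M \<Longrightarrow> 0 \<le> t \<Longrightarrow> 0 \<le> Y t \<omega> \<and> Y t \<omega> \<le> 1"
    and continuous_paths: "\<And>\<omega>. \<omega> \<in> space M \<Longrightarrow> continuous_on {0..} (\<lambda>t. Y t \<omega>)"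
    and initial: "\<And>\<omega>. \<omega> \<in> space M \<Longrightarrow> Y 0 \<omega> = y0"
    and compensator_growth: "\<And>\<omega> s t L. \<omega> \<in> space M \<Longrightarrow> 0 \<le> s \<Longrightarrow> s \<le> t \<Longrightarrow>
        (\<And>r. r \<in> {s..t} \<Longrightarrow> L \<le> Y r \<omega> * (1 - Y r \<omega>)) \<Longrightarrow> g * (t - s) * L \<le> A t \<omega> - A s \<omega>"
    and rate_pos: "0 < g" and initial_pos: "0 < y0" and initial_less_one: "y0 < 1"
begin

sublocale prob_space M by (rule prob)

lemma subalgebra_F: "subalgebra M (F t)"
  using filtration unfolding is_filtration_def by auto

lemma measurable_F_mono:
  assumes "0 \<le> s" "s \<le> t" "f \<in> borel_measurable (F s)"
  shows "f \<in> borel_measurable (F t)"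
proof -
  have "subalgebra (F t) (F s)"
    using subalgebra_F[of s] subalgebra_F[of t] filtration assms unfolding is_filtration_def subalgebra_def by auto
  then show ?thesis using measurable_from_subalg assms by blast
qed

lemma Y_measurable_F: "0 \<le> t \<Longrightarrow> Y t \<in> borel_measurable (F t)"
  using martingale unfolding is_martingale_def by auto

lemma Y_measurable[measurable]: "0 \<le> t \<Longrightarrow> Y t \<in> borel_measurable M"
  using measurable_from_subalg[OF subalgebra_F Y_measurable_F] by blast

lemma integrable_Y: "0 \<le> t \<Longrightarrow> integrable M (Y t)"
  using martingale unfolding is_martingale_def by auto

lemma integrable_compensated_square: "0 \<le> t \<Longrightarrow> integrable M (\<lambda>\<omega>. Y t \<omega> * Y t \<omega> - A t \<omega>)"
  using compensated_square unfolding is_martingale_def by auto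

lemma abs_Y_le_1: "\<omega> \<in> space M \<Longrightarrow> 0 \<le> t \<Longrightarrow> \<bar>Y t \<omega>\<bar> \<le> 1"
  using range[of \<omega> t] by auto

lemma abs_Y_diff_le_1: "\<omega> \<in> space M \<Longrightarrow> 0 \<le> r \<Longrightarrow> 0 \<le> s \<Longrightarrow> \<bar>Y r \<omega> - Y s \<omega>\<bar> \<le> 1"
  using range[of \<omega> r] range[of \<omega> s] by auto

lemma integrable_bounded:
  fixes f :: "'a \<Rightarrow> real"
  shows "f \<in> borel_measurable M \<Longrightarrow> (\<And>x. x \<in> space M \<Longrightarrow> \<bar>f x\<bar> \<le> B) \<Longrightarrow> integrable M f"
  by (rule integrable_const_bound[where B=B]) auto

lemma integrable_Y_square: "0 \<le> t \<Longrightarrow> integrable M (\<lambda>\<omega>. Y t \<omega> * Y t \<omega>)"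
  by (rule integrable_bounded[where B=1]) (use range in \<open>auto simp: abs_mult intro!: mult_le_one\<close>)

lemma integrable_A: "0 \<le> t \<Longrightarrow> integrable M (A t)"
  using Bochner_Integration.integrable_diff[OF integrable_Y_square integrable_compensated_square, of t t]
  by simp

lemma A_measurable[measurable]: "0 \<le> t \<Longrightarrow> A t \<in> borel_measurable M"
  using integrable_A by (rule borel_measurable_integrable)

lemma integrable_exp_Y: "0 \<le> t \<Longrightarrow> 0 \<le> \<theta> \<Longrightarrow> integrable M (\<lambda>\<omega>. exp (-\<theta> * Y t \<omega>))"
  by (rule integrable_bounded[where B=1]) (use range in auto)

lemma integral_Y: "0 \<le> t \<Longrightarrow> (\<integral>\<omega>. Y t \<omega> \<partial>M) = y0"
  using martingale_integral_mult_eq[OF prob filtration martingale order_refl, of t "\<lambda>_. 1" 1]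
  by (simp add: initial prob_space cong: Bochner_Integration.integral_cong)

lemma martingale_mult_eq:
  "0 \<le> s \<Longrightarrow> s \<le> t \<Longrightarrow> h \<in> borel_measurable (F s) \<Longrightarrow> (\<And>x. x \<in> space M \<Longrightarrow> \<bar>h x\<bar> \<le> B) \<Longrightarrow>
    (\<integral>\<omega>. h \<omega> * Y t \<omega> \<partial>M) = (\<integral>\<omega>. h \<omega> * Y s \<omega> \<partial>M)"
  by (rule martingale_integral_mult_eq[OF prob filtration martingale])

lemma compensated_square_mult_eq:
  "0 \<le> s \<Longrightarrow> s \<le> t \<Longrightarrow> h \<in> borel_measurable (F s) \<Longrightarrow> (\<And>x. x \<in> space M \<Longrightarrow> \<bar>h x\<bar> \<le> B) \<Longrightarrow>
    (\<integral>\<omega>. h \<omega> * (Y t \<omega> * Y t \<omega> - A t \<omega>) \<partial>M) = (\<integral>\<omega>. h \<omega> * (Y s \<omega> * Y s \<omega> - A s \<omega>) \<partial>M)"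
  by (rule martingale_integral_mult_eq[OF prob filtration compensated_square])

lemma integrable_mult_increment:
  assumes "0 \<le> s" "s \<le> t" "h \<in> borel_measurable M" "\<And>x. x \<in> space M \<Longrightarrow> \<bar>h x\<bar> \<le> B"
  shows "integrable M (\<lambda>\<omega>. h \<omega> * (Y t \<omega> - Y s \<omega>))"
  using assms by (intro integrable_bounded_mult[where B=B] Bochner_Integration.integrable_diff integrable_Y) auto

lemma integral_mult_increment:
  assumes st: "0 \<le> s" "s \<le> t" and h: "h \<in> borel_measurable (F s)"
    and bound: "\<And>x. x \<in> space M \<Longrightarrow> \<bar>h x\<bar> \<le> B"
  shows "(\<integral>\<omega>. h \<omega> * (Y t \<omega> - Y s \<omega>) \<partial>M) = 0"
proof -
  have hM: "h \<in> borel_measurable M" using measurable_from_subalg[OF subalgebra_F h] .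
  have "integrable M (\<lambda>\<omega>. h \<omega> * Y r \<omega>)" if "0 \<le> r" for r
    using integrable_bounded_mult[OF integrable_Y[OF that] hM bound] .
  then show ?thesis
    using martingale_mult_eq[OF st h bound] st by (simp add: right_diff_distrib)
qed

lemma integral_mult_square_increment:
  assumes st: "0 \<le> s" "s \<le> t" and h: "h \<in> borel_measurable (F s)"
    and bound: "\<And>x. x \<in> space M \<Longrightarrow> \<bar>h x\<bar> \<le> B"
  shows "(\<integral>\<omega>. h \<omega> * (Y t \<omega> - Y s \<omega>)^2 \<partial>M)
    = (\<integral>\<omega>. h \<omega> * (Y t \<omega> * Y t \<omega>) \<partial>M) - (\<integral>\<omega>. h \<omega> * (Y s \<omega> * Y s \<omega>) \<partial>M)"
proof -
  have hM: "h \<in> borel_measurable M" using measurable_from_subalg[OF subalgebra_F h] .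
  have hY: "(\<lambda>\<omega>. 2 * h \<omega> * Y s \<omega>) \<in> borel_measurable (F s)"
    using h Y_measurable_F[OF st(1)] by measurable
  have hY_bound: "\<bar>2 * h x * Y s x\<bar> \<le> 2 * \<bar>B\<bar>" if "x \<in> space M" for x
    using mult_mono[OF order.trans[OF bound[OF that] abs_ge_self] abs_Y_le_1[OF that st(1)]]
    by (simp add: abs_mult)
  have "h \<omega> * (Y t \<omega> - Y s \<omega>)^2
      = h \<omega> * (Y t \<omega> * Y t \<omega>) - h \<omega> * (Y s \<omega> * Y s \<omega>) - 2 * h \<omega> * Y s \<omega> * (Y t \<omega> - Y s \<omega>)" for \<omega>
    by (simp add: power2_eq_square algebra_simps)
  moreover have "integrable M (\<lambda>\<omega>. h \<omega> * (Y r \<omega> * Y r \<omega>))" if "0 \<le> r" for r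
    using integrable_bounded_mult[OF integrable_Y_square[OF that] hM bound] .
  moreover have "integrable M (\<lambda>\<omega>. 2 * h \<omega> * Y s \<omega> * (Y t \<omega> - Y s \<omega>))"
    using integrable_mult_increment[OF st measurable_from_subalg[OF subalgebra_F hY] hY_bound] .
  ultimately show ?thesis
    using integral_mult_increment[OF st hY hY_bound] st by simp
qed

lemma integral_mult_compensated_square_increment:
  assumes st: "0 \<le> s" "s \<le> t" and h: "h \<in> borel_measurable (F s)"
    and bound: "\<And>x. x \<in> space M \<Longrightarrow> \<bar>h x\<bar> \<le> B"
  shows "(\<integral>\<omega>. h \<omega> * (Y t \<omega> - Y s \<omega>)^2 \<partial>M) = (\<integral>\<omega>. h \<omega> * (A t \<omega> - A s \<omega>) \<partial>M)"
proof -
  have hM: "h \<in> borel_measurable M" using measurable_from_subalg[OF subalgebra_F h] .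
  have int: "integrable M (\<lambda>\<omega>. h \<omega> * f \<omega>)" if "integrable M f" for f
    using integrable_bounded_mult[OF that hM bound] .
  have "(\<integral>\<omega>. h \<omega> * (A t \<omega> - A s \<omega>) \<partial>M)
      = (\<integral>\<omega>. h \<omega> * (Y t \<omega> * Y t \<omega>) \<partial>M) - (\<integral>\<omega>. h \<omega> * (Y s \<omega> * Y s \<omega>) \<partial>M)
        - ((\<integral>\<omega>. h \<omega> * (Y t \<omega> * Y t \<omega> - A t \<omega>) \<partial>M) - (\<integral>\<omega>. h \<omega> * (Y s \<omega> * Y s \<omega> - A s \<omega>) \<partial>M))"
    using st int[OF integrable_A] int[OF integrable_Y_square] int[OF integrable_compensated_square]
    by (simp add: algebra_simps)
  then show ?thesis
    using compensated_square_mult_eq[OF st h bound] integral_mult_square_increment[OF st h bound] by simp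
qed

lemma second_order_increment_mean_zero:
  fixes \<theta> :: real
  assumes st: "0 \<le> s" "s \<le> t" and h: "h \<in> borel_measurable (F s)"
    and bound: "\<And>x. x \<in> space M \<Longrightarrow> \<bar>h x\<bar> \<le> B"
  defines "D \<equiv> \<lambda>\<omega>. - \<theta> * (h \<omega> * (Y t \<omega> - Y s \<omega>))
      + \<theta>^2/2 * (h \<omega> * (Y t \<omega> - Y s \<omega>)^2 - h \<omega> * (A t \<omega> - A s \<omega>))"
  shows "integrable M D" "(\<integral>\<omega>. D \<omega> \<partial>M) = 0"
proof -
  have t: "0 \<le> t" using st by linarith
  have h_M: "h \<in> borel_measurable M" using measurable_from_subalg[OF subalgebra_F h] .
  have "integrable M (\<lambda>\<omega>. (Y t \<omega> - Y s \<omega>)^2)"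
    by (rule integrable_bounded[where B=1]) (use abs_Y_diff_le_1 st t in \<open>auto simp: abs_square_le_1\<close>)
  then have "integrable M (\<lambda>\<omega>. h \<omega> * (Y t \<omega> - Y s \<omega>)^2)"
    by (rule integrable_bounded_mult[OF _ h_M bound])
  moreover have "integrable M (\<lambda>\<omega>. h \<omega> * (A t \<omega> - A s \<omega>))"
    using st t by (intro integrable_bounded_mult[OF _ h_M bound] integrable_A Bochner_Integration.integrable_diff)
  moreover note integrable_mult_increment[OF st h_M bound]
  ultimately show "integrable M D" "(\<integral>\<omega>. D \<omega> \<partial>M) = 0"
    unfolding D_def
    using integral_mult_increment[OF st h bound] integral_mult_compensated_square_increment[OF st h bound]
    by simp_all
qed

lemma compensator_increment_lower:
  assumes \<omega>: "\<omega> \<in> space M" and st: "0 \<le> s" "s \<le> t"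
    and d: "\<And>r. r \<in> {s..t} \<Longrightarrow> \<bar>Y r \<omega> - Y s \<omega>\<bar> \<le> d"
  shows "g * (t - s) * (Y s \<omega> * (1 - Y s \<omega>) - d) \<le> A t \<omega> - A s \<omega>"
proof (rule compensator_growth[OF \<omega> st])
  fix r assume r: "r \<in> {s..t}"
  have "\<bar>(Y r \<omega> - Y s \<omega>) * (1 - Y r \<omega> - Y s \<omega>)\<bar> \<le> \<bar>Y r \<omega> - Y s \<omega>\<bar>"
    unfolding abs_mult by (rule mult_right_le_one_le) (use r range[OF \<omega>, of r] range[OF \<omega> st(1)] st in auto)
  moreover have "Y r \<omega> * (1 - Y r \<omega>) - Y s \<omega> * (1 - Y s \<omega>) = (Y r \<omega> - Y s \<omega>) * (1 - Y r \<omega> - Y s \<omega>)"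
    by (simp add: algebra_simps)
  ultimately show "Y s \<omega> * (1 - Y s \<omega>) - d \<le> Y r \<omega> * (1 - Y r \<omega>)" using d[OF r] by linarith
qed

lemma laplace_step_pointwise:
  fixes \<theta> d :: real
  assumes \<omega>: "\<omega> \<in> space M" and st: "0 \<le> s" "s \<le> t" and \<theta>: "0 \<le> \<theta>" and d: "0 \<le> d"
    and d_bound: "\<And>r. r \<in> {s..t} \<Longrightarrow> \<bar>Y r \<omega> - Y s \<omega>\<bar> \<le> d"
  defines "h \<equiv> exp (-\<theta> * Y s \<omega>)" and "c \<equiv> g * \<theta>^2 * (t - s) / 2"
  shows "- \<theta> * (h * (Y t \<omega> - Y s \<omega>)) + \<theta>^2/2 * (h * (Y t \<omega> - Y s \<omega>)^2 - h * (A t \<omega> - A s \<omega>))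
    \<le> exp (-\<theta> * Y t \<omega>) - h * (1 + c * (Y s \<omega> * (1 - Y s \<omega>))) + c * d + \<theta>^3/6 * \<bar>Y t \<omega> - Y s \<omega>\<bar>^3"
proof -
  have c: "0 \<le> c" unfolding c_def using rate_pos st by simp
  have "\<theta>^2/2 * (g * (t - s) * (Y s \<omega> * (1 - Y s \<omega>) - d)) \<le> \<theta>^2/2 * (A t \<omega> - A s \<omega>)"
    using mult_left_mono[OF compensator_increment_lower[OF \<omega> st d_bound], of "\<theta>^2/2"] by simp
  then have "c * (Y s \<omega> * (1 - Y s \<omega>) - d) \<le> \<theta>^2/2 * (A t \<omega> - A s \<omega>)"
    unfolding c_def by (simp add: ac_simps)
  then show ?thesis
    unfolding h_def using exp_increment_second_order_lower[OF \<theta> _ c d] range[OF \<omega> st(1)] by blast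
qed

lemma laplace_step:
  fixes s t \<theta> :: real and \<delta> :: "'a \<Rightarrow> real"
  assumes st: "0 \<le> s" "s \<le> t" and \<theta>: "0 \<le> \<theta>"
    and \<delta>_measurable[measurable]: "\<delta> \<in> borel_measurable M"
    and \<delta>_range: "\<And>\<omega>. \<omega> \<in> space M \<Longrightarrow> 0 \<le> \<delta> \<omega> \<and> \<delta> \<omega> \<le> 1"
    and \<delta>_bound: "\<And>\<omega> r. \<omega> \<in> space M \<Longrightarrow> r \<in> {s..t} \<Longrightarrow> \<bar>Y r \<omega> - Y s \<omega>\<bar> \<le> \<delta> \<omega>"
  defines "c \<equiv> g * \<theta>^2 * (t - s) / 2"
  shows "(\<integral>\<omega>. exp (-\<theta> * Y s \<omega>) * (1 + c * (Y s \<omega> * (1 - Y s \<omega>))) \<partial>M)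
      - c * (\<integral>\<omega>. \<delta> \<omega> \<partial>M) - \<theta>^3/6 * (\<integral>\<omega>. \<bar>Y t \<omega> - Y s \<omega>\<bar>^3 \<partial>M)
    \<le> (\<integral>\<omega>. exp (-\<theta> * Y t \<omega>) \<partial>M)"
proof -
  have t: "0 \<le> t" using st by linarith
  have c: "0 \<le> c" unfolding c_def using rate_pos st by simp
  define h where "h \<omega> = exp (-\<theta> * Y s \<omega>)" for \<omega>
  have h_F: "h \<in> borel_measurable (F s)" unfolding h_def using Y_measurable_F[OF st(1)] by measurable
  have h_M[measurable]: "h \<in> borel_measurable M" using measurable_from_subalg[OF subalgebra_F h_F] .
  have h_bound: "\<bar>h \<omega>\<bar> \<le> 1" if "\<omega> \<in> space M" for \<omega>
    using range[OF that st(1)] \<theta> unfolding h_def by simp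
  have [measurable]: "Y s \<in> borel_measurable M" "Y t \<in> borel_measurable M" using st t by auto
  define lower where "lower \<omega> = - \<theta> * (h \<omega> * (Y t \<omega> - Y s \<omega>))
      + \<theta>^2/2 * (h \<omega> * (Y t \<omega> - Y s \<omega>)^2 - h \<omega> * (A t \<omega> - A s \<omega>))" for \<omega>
  define upper where "upper \<omega> = exp (-\<theta> * Y t \<omega>) - h \<omega> * (1 + c * (Y s \<omega> * (1 - Y s \<omega>)))
      + c * \<delta> \<omega> + \<theta>^3/6 * \<bar>Y t \<omega> - Y s \<omega>\<bar>^3" for \<omega>
  have int_exp: "integrable M (\<lambda>\<omega>. exp (-\<theta> * Y t \<omega>))" using integrable_exp_Y[OF t \<theta>] .
  have int_weight: "integrable M (\<lambda>\<omega>. h \<omega> * (1 + c * (Y s \<omega> * (1 - Y s \<omega>))))"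
    by (intro integrable_bounded_mult[OF _ h_M h_bound] integrable_bounded[where B="1 + c"])
      (use st range c in \<open>auto simp: abs_mult intro!: mult_le_one mult_left_le\<close>)
  have int_\<delta>: "integrable M \<delta>"
    by (rule integrable_bounded[where B=1]) (use \<delta>_range in auto)
  have int_cube: "integrable M (\<lambda>\<omega>. \<bar>Y t \<omega> - Y s \<omega>\<bar>^3)"
    by (rule integrable_bounded[where B=1]) (use st t abs_Y_diff_le_1 in \<open>auto simp: power_le_one\<close>)
  have int_lower: "integrable M lower" and "(\<integral>\<omega>. lower \<omega> \<partial>M) = 0"
    unfolding lower_def using second_order_increment_mean_zero[OF st h_F h_bound] by simp_all
  moreover have int_upper: "integrable M upper"
    unfolding upper_def using int_exp int_weight int_\<delta> int_cube by simp
  moreover have "lower \<omega> \<le> upper \<omega>" if \<omega>: "\<omega> \<in> space M" for \<omega>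
    unfolding lower_def upper_def h_def c_def
    using laplace_step_pointwise[OF \<omega> st \<theta> _ \<delta>_bound[OF \<omega>]] \<delta>_range[OF \<omega>] by simp
  ultimately have "0 \<le> (\<integral>\<omega>. upper \<omega> \<partial>M)"
    using integral_mono[OF int_lower int_upper] by simp
  moreover have "(\<integral>\<omega>. upper \<omega> \<partial>M) = (\<integral>\<omega>. exp (-\<theta> * Y t \<omega>) \<partial>M)
      - (\<integral>\<omega>. h \<omega> * (1 + c * (Y s \<omega> * (1 - Y s \<omega>))) \<partial>M)
      + c * (\<integral>\<omega>. \<delta> \<omega> \<partial>M) + \<theta>^3/6 * (\<integral>\<omega>. \<bar>Y t \<omega> - Y s \<omega>\<bar>^3 \<partial>M)"
    unfolding upper_def using int_exp int_weight int_\<delta> int_cube by simp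
  ultimately show ?thesis unfolding h_def by simp
qed

text \<open>The supremum runs over a countable set to make it measurable; by continuity of the paths it
  bounds |Y r - Y s| for every r in [s,t].\<close>

definition osc :: "real \<Rightarrow> real \<Rightarrow> 'a \<Rightarrow> real" where
  "osc s t \<omega> = (SUP r \<in> ({s..t} \<inter> \<rat>) \<union> {t}. \<bar>Y r \<omega> - Y s \<omega>\<bar>)"

lemma bdd_above_osc:
  "\<omega> \<in> space M \<Longrightarrow> 0 \<le> s \<Longrightarrow> s \<le> t \<Longrightarrow> bdd_above ((\<lambda>r. \<bar>Y r \<omega> - Y s \<omega>\<bar>) ` (({s..t} \<inter> \<rat>) \<union> {t}))"
  by (rule bdd_aboveI[where M=1]) (auto intro!: abs_Y_diff_le_1)

lemma osc_measurable[measurable]: "0 \<le> s \<Longrightarrow> s \<le> t \<Longrightarrow> osc s t \<in> borel_measurable M"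
  unfolding osc_def
proof (rule borel_measurable_cSUP)
  show "countable (({s..t} \<inter> \<rat>) \<union> {t})" by (simp add: countable_Int2 countable_rat)
  fix r assume "0 \<le> s" "s \<le> t" "r \<in> ({s..t} \<inter> \<rat>) \<union> {t}"
  then have [measurable]: "Y r \<in> borel_measurable M" "Y s \<in> borel_measurable M" by auto
  show "(\<lambda>\<omega>. \<bar>Y r \<omega> - Y s \<omega>\<bar>) \<in> borel_measurable M" by measurable
qed (rule bdd_above_osc)

lemma abs_Y_diff_le_osc:
  assumes \<omega>: "\<omega> \<in> space M" and st: "0 \<le> s" "s \<le> t" and r: "r \<in> {s..t}"
  shows "\<bar>Y r \<omega> - Y s \<omega>\<bar> \<le> osc s t \<omega>"
proof -
  have upper: "\<bar>Y q \<omega> - Y s \<omega>\<bar> \<le> osc s t \<omega>" if "q \<in> ({s..t} \<inter> \<rat>) \<union> {t}" for q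
    unfolding osc_def by (rule cSUP_upper[OF that bdd_above_osc[OF \<omega> st]])
  show ?thesis
  proof (cases "s < t")
    case True
    have "continuous_on {s..t} (\<lambda>r. Y r \<omega>)"
      using continuous_paths[OF \<omega>] by (rule continuous_on_subset) (use st in auto)
    then have "continuous_on {s..t} (\<lambda>r. \<bar>Y r \<omega> - Y s \<omega>\<bar>)" by (intro continuous_intros)
    then show ?thesis using continuous_on_le_if_le_on_rationals[OF True _ _ r] upper by blast
  next
    case False
    then have "r = t" using r st by auto
    then show ?thesis using upper[of t] by simp
  qed
qed

lemma osc_nonneg: "\<omega> \<in> space M \<Longrightarrow> 0 \<le> s \<Longrightarrow> s \<le> t \<Longrightarrow> 0 \<le> osc s t \<omega>"
  using abs_Y_diff_le_osc[of \<omega> s t t] by (meson abs_ge_zero atLeastAtMost_iff order.trans order_refl)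

lemma osc_le:
  "\<omega> \<in> space M \<Longrightarrow> 0 \<le> s \<Longrightarrow> s \<le> t \<Longrightarrow> (\<And>r. r \<in> {s..t} \<Longrightarrow> \<bar>Y r \<omega> - Y s \<omega>\<bar> \<le> e) \<Longrightarrow> osc s t \<omega> \<le> e"
  unfolding osc_def by (rule cSUP_least) auto

lemma osc_le_1: "\<omega> \<in> space M \<Longrightarrow> 0 \<le> s \<Longrightarrow> s \<le> t \<Longrightarrow> osc s t \<omega> \<le> 1"
  by (rule osc_le) (auto intro!: abs_Y_diff_le_1)

lemma integrable_osc: "0 \<le> s \<Longrightarrow> s \<le> t \<Longrightarrow> integrable M (osc s t)"
  by (rule integrable_bounded[where B=1]) (use osc_nonneg osc_le_1 in auto)

lemma laplace_grid_step:
  assumes st: "0 \<le> s" "s \<le> t" and \<theta>: "0 < \<theta>" "\<theta> \<le> \<theta>'" and a: "0 < a" "a < 1"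
    and cost: "exp (\<theta>' - \<theta>) - 1 \<le> g * \<theta>'^2 * (t - s) / 2 * (1 - a)"
  shows "(\<integral>\<omega>. exp (-\<theta> * Y s \<omega>) \<partial>M) - (\<theta>' - \<theta>) * exp (-\<theta> * a) * y0
      - g * \<theta>'^2 * (t - s) / 2 * (\<integral>\<omega>. osc s t \<omega> \<partial>M) - \<theta>'^3/6 * (\<integral>\<omega>. \<bar>Y t \<omega> - Y s \<omega>\<bar>^3 \<partial>M)
    \<le> (\<integral>\<omega>. exp (-\<theta>' * Y t \<omega>) \<partial>M)"
proof -
  define \<kappa> where "\<kappa> = g * \<theta>'^2 * (t - s) / 2"
  have \<kappa>: "0 \<le> \<kappa>" unfolding \<kappa>_def using rate_pos st by simp
  have int_exp: "integrable M (\<lambda>\<omega>. exp (-\<theta> * Y s \<omega>))" using integrable_exp_Y[OF st(1)] \<theta> by simp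
  have int_weight: "integrable M (\<lambda>\<omega>. exp (-\<theta>' * Y s \<omega>) * (1 + \<kappa> * (Y s \<omega> * (1 - Y s \<omega>))))"
    by (intro integrable_bounded_mult[where B=1] integrable_bounded[where B="1 + \<kappa>"])
      (use st range \<kappa> \<theta> in \<open>auto simp: abs_mult intro!: mult_le_one mult_left_le\<close>)
  have "(\<integral>\<omega>. exp (-\<theta> * Y s \<omega>) \<partial>M) - (\<theta>' - \<theta>) * exp (-\<theta> * a) * y0
      = (\<integral>\<omega>. exp (-\<theta> * Y s \<omega>) - (\<theta>' - \<theta>) * exp (-\<theta> * a) * Y s \<omega> \<partial>M)"
    using int_exp integrable_Y[OF st(1)] integral_Y[OF st(1)] by simp
  also have "\<dots> \<le> (\<integral>\<omega>. exp (-\<theta>' * Y s \<omega>) * (1 + \<kappa> * (Y s \<omega> * (1 - Y s \<omega>))) \<partial>M)"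
  proof (rule integral_mono[OF _ int_weight])
    show "integrable M (\<lambda>\<omega>. exp (-\<theta> * Y s \<omega>) - (\<theta>' - \<theta>) * exp (-\<theta> * a) * Y s \<omega>)"
      using int_exp integrable_Y[OF st(1)] by simp
    show "exp (-\<theta> * Y s \<omega>) - (\<theta>' - \<theta>) * exp (-\<theta> * a) * Y s \<omega>
        \<le> exp (-\<theta>' * Y s \<omega>) * (1 + \<kappa> * (Y s \<omega> * (1 - Y s \<omega>)))" if "\<omega> \<in> space M" for \<omega>
      using exp_raise_exponent_bound[of "Y s \<omega>" \<theta> "\<theta>' - \<theta>" a \<kappa>] range[OF that st(1)] \<theta> a \<kappa> cost
      unfolding \<kappa>_def by simp
  qed
  finally show ?thesis
    using laplace_step[OF st _ osc_measurable[OF st], of \<theta>'] \<theta> st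
    by (fastforce simp: \<kappa>_def intro: osc_nonneg osc_le_1 abs_Y_diff_le_osc)
qed

lemma laplace_riccati_step:
  fixes \<tau> lam a :: real and n i :: nat
  assumes \<tau>: "0 < \<tau>" and lam: "0 < lam" and a: "0 < a" "a < 1"
    and fine: "g * (1 - a) / 4 * (\<tau> / n) * lam^2 \<le> 1" and i: "i < n"
  defines "t \<equiv> grid \<tau> n" and "\<theta> \<equiv> riccati_grid lam (g * (1 - a) / 4) \<tau> n"
  shows "(\<integral>\<omega>. exp (-\<theta> i * Y (t i) \<omega>) \<partial>M) - (\<theta> (Suc i) - \<theta> i) * exp (-\<theta> i * a) * y0
      - g * lam^2 / 2 * (\<tau> / n) * (\<integral>\<omega>. osc (t i) (t (Suc i)) \<omega> \<partial>M)
      - lam^3/6 * (\<integral>\<omega>. \<bar>Y (t (Suc i)) \<omega> - Y (t i) \<omega>\<bar>^3 \<partial>M)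
    \<le> (\<integral>\<omega>. exp (-\<theta> (Suc i) * Y (t (Suc i)) \<omega>) \<partial>M)"
proof -
  define c where "c = g * (1 - a) / 4"
  have c: "0 < c" unfolding c_def using rate_pos a by simp
  have t: "0 \<le> t i" "t i \<le> t (Suc i)" "t (Suc i) - t i = \<tau> / n"
    unfolding t_def using \<tau> by (auto intro: grid_nonneg grid_le_Suc grid_Suc_diff)
  have \<theta>: "0 < \<theta> i" "\<theta> (Suc i) \<le> lam"
    unfolding \<theta>_def c_def[symmetric] using i lam c \<tau> by (auto intro: riccati_grid_pos riccati_grid_le)
  have \<eta>: "0 \<le> \<theta> (Suc i) - \<theta> i" "\<theta> (Suc i) - \<theta> i \<le> 1"
    using riccati_grid_increment_bounds[OF lam c less_imp_le[OF \<tau>] i] fine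
    unfolding \<theta>_def c_def by auto
  have "exp (\<theta> (Suc i) - \<theta> i) - 1 \<le> 2 * c * (\<tau> / n) * \<theta> (Suc i)^2"
    unfolding \<theta>_def c_def[symmetric]
    using riccati_grid_exp_increment_le[OF lam c less_imp_le[OF \<tau>] i] fine by (simp add: c_def)
  also have "\<dots> = g * \<theta> (Suc i)^2 * (t (Suc i) - t i) / 2 * (1 - a)"
    unfolding c_def t(3) using i by (simp add: field_simps)
  finally have "(\<integral>\<omega>. exp (-\<theta> i * Y (t i) \<omega>) \<partial>M) - (\<theta> (Suc i) - \<theta> i) * exp (-\<theta> i * a) * y0
      - g * \<theta> (Suc i)^2 * (\<tau> / n) / 2 * (\<integral>\<omega>. osc (t i) (t (Suc i)) \<omega> \<partial>M)
      - \<theta> (Suc i)^3/6 * (\<integral>\<omega>. \<bar>Y (t (Suc i)) \<omega> - Y (t i) \<omega>\<bar>^3 \<partial>M)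
    \<le> (\<integral>\<omega>. exp (-\<theta> (Suc i) * Y (t (Suc i)) \<omega>) \<partial>M)"
    using laplace_grid_step[OF t(1,2) \<theta>(1) _ a] \<eta> t(3) by simp
  moreover have "g * \<theta> (Suc i)^2 * (\<tau> / n) / 2 * (\<integral>\<omega>. osc (t i) (t (Suc i)) \<omega> \<partial>M)
      \<le> g * lam^2 / 2 * (\<tau> / n) * (\<integral>\<omega>. osc (t i) (t (Suc i)) \<omega> \<partial>M)"
  proof (rule mult_right_mono)
    have "\<theta> (Suc i)^2 / 2 \<le> lam^2 / 2" using \<theta> \<eta> by (simp add: power_mono)
    then have "g * (\<theta> (Suc i)^2 / 2) * (\<tau> / n) \<le> g * (lam^2 / 2) * (\<tau> / n)"
      using rate_pos \<tau> by (intro mult_left_mono mult_right_mono) auto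
    then show "g * \<theta> (Suc i)^2 * (\<tau> / n) / 2 \<le> g * lam^2 / 2 * (\<tau> / n)" by simp
    show "0 \<le> (\<integral>\<omega>. osc (t i) (t (Suc i)) \<omega> \<partial>M)"
      using t osc_nonneg by (intro integral_nonneg_AE AE_I2) auto
  qed
  moreover have "\<theta> (Suc i)^3/6 * (\<integral>\<omega>. \<bar>Y (t (Suc i)) \<omega> - Y (t i) \<omega>\<bar>^3 \<partial>M)
      \<le> lam^3/6 * (\<integral>\<omega>. \<bar>Y (t (Suc i)) \<omega> - Y (t i) \<omega>\<bar>^3 \<partial>M)"
    using \<theta> \<eta> by (intro mult_right_mono integral_nonneg_AE AE_I2) (auto intro!: power_mono)
  ultimately show ?thesis by linarith
qed

lemma laplace_grid_lower_bound:
  fixes \<tau> lam a :: real and n :: nat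
  assumes \<tau>: "0 < \<tau>" and n: "0 < n" and lam: "0 < lam" and a: "0 < a" "a < 1"
    and fine: "g * (1 - a) / 4 * (\<tau> / n) * lam^2 \<le> 1"
  defines "t \<equiv> grid \<tau> n" and "\<theta> \<equiv> riccati_grid lam (g * (1 - a) / 4) \<tau> n"
  shows "exp (-\<theta> 0 * y0) - y0 * (3/a) * exp (-a * \<theta> 0)
      - g * lam^2 / 2 * (\<tau> / n) * (\<Sum>i<n. \<integral>\<omega>. osc (t i) (t (Suc i)) \<omega> \<partial>M)
      - lam^3/6 * (\<Sum>i<n. \<integral>\<omega>. \<bar>Y (t (Suc i)) \<omega> - Y (t i) \<omega>\<bar>^3 \<partial>M)
    \<le> (\<integral>\<omega>. exp (-lam * Y \<tau> \<omega>) \<partial>M)"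
proof -
  define c where "c = g * (1 - a) / 4"
  have c: "0 < c" unfolding c_def using rate_pos a by simp
  define u where "u i = (\<integral>\<omega>. exp (-\<theta> i * Y (t i) \<omega>) \<partial>M)" for i
  define r where "r i = (\<theta> (Suc i) - \<theta> i) * exp (-\<theta> i * a) * y0
      + g * lam^2 / 2 * (\<tau> / n) * (\<integral>\<omega>. osc (t i) (t (Suc i)) \<omega> \<partial>M)
      + lam^3/6 * (\<integral>\<omega>. \<bar>Y (t (Suc i)) \<omega> - Y (t i) \<omega>\<bar>^3 \<partial>M)" for i
  have "u 0 - (\<Sum>i<n. r i) \<le> u n"
    using laplace_riccati_step[OF \<tau> lam a fine] unfolding u_def r_def t_def \<theta>_def
    by (intro telescoping_lower_bound) (simp add: algebra_simps)
  moreover have "u 0 = exp (-\<theta> 0 * y0)"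
    unfolding u_def t_def by (simp add: initial prob_space cong: Bochner_Integration.integral_cong)
  moreover have "u n = (\<integral>\<omega>. exp (-lam * Y \<tau> \<omega>) \<partial>M)"
    unfolding u_def t_def \<theta>_def using riccati_grid_self[OF lam c less_imp_le[OF \<tau>] n] grid_self[OF n]
    by (simp add: c_def)
  moreover have "(\<Sum>i<n. (\<theta> (Suc i) - \<theta> i) * exp (-\<theta> i * a)) \<le> 3/a * exp (-a * \<theta> 0)"
  proof -
    have "\<theta> i \<le> \<theta> (Suc i) \<and> a * (\<theta> (Suc i) - \<theta> i) \<le> 1" if "i < n" for i
      using riccati_grid_increment_bounds[OF lam c less_imp_le[OF \<tau>] that] fine a
      unfolding \<theta>_def c_def by (auto intro!: mult_le_one)
    then show ?thesis using sum_increments_mult_exp_le[OF a(1)] by (simp add: mult.commute)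
  qed
  ultimately show ?thesis
    unfolding r_def sum.distrib sum_distrib_left[symmetric] sum_distrib_right[symmetric]
    using initial_pos by (smt (verit) mult_left_mono mult.commute mult.assoc)
qed

lemma integral_Y_square_bounds:
  assumes "0 \<le> t"
  shows "0 \<le> (\<integral>\<omega>. Y t \<omega> * Y t \<omega> \<partial>M)" "(\<integral>\<omega>. Y t \<omega> * Y t \<omega> \<partial>M) \<le> 1"
proof -
  have bounds: "0 \<le> Y t \<omega> * Y t \<omega> \<and> Y t \<omega> * Y t \<omega> \<le> 1" if "\<omega> \<in> space M" for \<omega>
    using range[OF that assms] by (auto intro: mult_le_one)
  show "0 \<le> (\<integral>\<omega>. Y t \<omega> * Y t \<omega> \<partial>M)" using bounds by (intro integral_nonneg_AE AE_I2) auto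
  have "(\<integral>\<omega>. Y t \<omega> * Y t \<omega> \<partial>M) \<le> (\<integral>\<omega>. 1 \<partial>M)"
    using bounds by (intro integral_mono integrable_Y_square assms) auto
  then show "(\<integral>\<omega>. Y t \<omega> * Y t \<omega> \<partial>M) \<le> 1" by (simp add: prob_space)
qed

lemma integral_square_increment_mult_tail_le:
  fixes t :: "nat \<Rightarrow> real"
  assumes t: "\<And>i. 0 \<le> t i" "\<And>i. t i \<le> t (Suc i)" and i: "i < n"
  defines "D \<equiv> \<lambda>j \<omega>. Y (t (Suc j)) \<omega> - Y (t j) \<omega>"
  shows "(\<integral>\<omega>. (D i \<omega>)^2 * (\<Sum>j\<in>{Suc i..<n}. (D j \<omega>)^2) \<partial>M) \<le> (\<integral>\<omega>. (D i \<omega>)^2 \<partial>M)"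
proof -
  have t_mono: "t j \<le> t k" if "j \<le> k" for j k by (rule lift_Suc_mono_le[of t, OF t(2) that])
  have [measurable]: "Y (t j) \<in> borel_measurable M" for j using Y_measurable[OF t(1)] .
  have [measurable]: "D j \<in> borel_measurable M" for j unfolding D_def by measurable
  have D_bounds: "0 \<le> (D j \<omega>)^2 \<and> (D j \<omega>)^2 \<le> 1" if "\<omega> \<in> space M" for j \<omega>
    using abs_Y_diff_le_1[OF that t(1) t(1)] unfolding D_def by (simp add: abs_square_le_1)
  have int_D: "integrable M (\<lambda>\<omega>. (D j \<omega>)^2)" for j
    by (rule integrable_bounded[where B=1]) (use D_bounds in auto)
  have D_F: "(\<lambda>\<omega>. (D i \<omega>)^2) \<in> borel_measurable (F (t j))" if "Suc i \<le> j" for j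
  proof -
    have "(\<lambda>\<omega>. (D i \<omega>)^2) \<in> borel_measurable (F (t (Suc i)))" unfolding D_def
      using Y_measurable_F[OF t(1)[of "Suc i"]] measurable_F_mono[OF t(1)[of i] t(2)[of i] Y_measurable_F[OF t(1)[of i]]]
      by measurable
    then show ?thesis by (rule measurable_F_mono[OF t(1) t_mono[OF that]])
  qed
  define E where "E j = (\<integral>\<omega>. (D i \<omega>)^2 * (Y (t j) \<omega> * Y (t j) \<omega>) \<partial>M)" for j
  have int_E: "integrable M (\<lambda>\<omega>. (D i \<omega>)^2 * (Y (t j) \<omega> * Y (t j) \<omega>))" for j
    by (rule integrable_bounded_mult[OF integrable_Y_square[OF t(1)] _, of _ 1]) (use D_bounds in auto)
  have "(\<integral>\<omega>. (D i \<omega>)^2 * (\<Sum>j\<in>{Suc i..<n}. (D j \<omega>)^2) \<partial>M)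
      = (\<Sum>j\<in>{Suc i..<n}. \<integral>\<omega>. (D i \<omega>)^2 * (D j \<omega>)^2 \<partial>M)"
    using integrable_bounded_mult[OF int_D _, of "\<lambda>\<omega>. (D i \<omega>)^2" 1] D_bounds
    by (simp add: sum_distrib_left)
  also have "\<dots> = (\<Sum>j\<in>{Suc i..<n}. E (Suc j) - E j)"
    unfolding E_def D_def
    using integral_mult_square_increment[OF t(1) t(2) D_F, where B=1] D_bounds unfolding D_def
    by (intro sum.cong) auto
  also have "\<dots> = E n - E (Suc i)" using i by (simp add: sum_Suc_diff')
  also have "\<dots> = (\<integral>\<omega>. (D i \<omega>)^2 * (Y (t n) \<omega> * Y (t n) \<omega> - Y (t (Suc i)) \<omega> * Y (t (Suc i)) \<omega>) \<partial>M)"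
    using int_E unfolding E_def by (simp add: right_diff_distrib)
  also have "\<dots> \<le> (\<integral>\<omega>. (D i \<omega>)^2 \<partial>M)"
  proof (rule integral_mono[OF _ int_D])
    show "integrable M (\<lambda>\<omega>. (D i \<omega>)^2 * (Y (t n) \<omega> * Y (t n) \<omega> - Y (t (Suc i)) \<omega> * Y (t (Suc i)) \<omega>))"
      using int_E[of n] int_E[of "Suc i"] by (simp add: right_diff_distrib)
    fix \<omega> assume \<omega>: "\<omega> \<in> space M"
    have "Y (t n) \<omega> * Y (t n) \<omega> - Y (t (Suc i)) \<omega> * Y (t (Suc i)) \<omega> \<le> 1"
      using range[OF \<omega> t(1)[of n]] range[OF \<omega> t(1)[of "Suc i"]] by (smt (verit) mult_le_one mult_nonneg_nonneg)
    then show "(D i \<omega>)^2 * (Y (t n) \<omega> * Y (t n) \<omega> - Y (t (Suc i)) \<omega> * Y (t (Suc i)) \<omega>) \<le> (D i \<omega>)^2"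
      using D_bounds[OF \<omega>, of i] by (simp add: mult_left_le)
  qed
  finally show ?thesis .
qed

lemma integral_square_sum_square_increments_le:
  fixes t :: "nat \<Rightarrow> real"
  assumes t: "\<And>i. 0 \<le> t i" "\<And>i. t i \<le> t (Suc i)"
  shows "(\<integral>\<omega>. (\<Sum>i<n. (Y (t (Suc i)) \<omega> - Y (t i) \<omega>)^2)^2 \<partial>M) \<le> 3"
proof -
  define D where "D i \<omega> = Y (t (Suc i)) \<omega> - Y (t i) \<omega>" for i \<omega>
  have [measurable]: "D i \<in> borel_measurable M" for i unfolding D_def using t by measurable
  have D_bounds: "0 \<le> (D i \<omega>)^2 \<and> (D i \<omega>)^2 \<le> 1" if "\<omega> \<in> space M" for i \<omega>
    using abs_Y_diff_le_1[OF that t(1) t(1)] unfolding D_def by (simp add: abs_square_le_1)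
  have int_D: "integrable M (\<lambda>\<omega>. (D i \<omega>)^2)" for i
    by (rule integrable_bounded[where B=1]) (use D_bounds in auto)
  have int_D4: "integrable M (\<lambda>\<omega>. (D i \<omega>)^2 * (D i \<omega>)^2)" for i
    by (rule integrable_bounded_mult[OF int_D, of _ 1]) (use D_bounds in auto)
  have int_tail: "integrable M (\<lambda>\<omega>. (D i \<omega>)^2 * (\<Sum>j\<in>{Suc i..<n}. (D j \<omega>)^2))" for i
    unfolding sum_distrib_left
    by (intro Bochner_Integration.integrable_sum integrable_bounded_mult[OF int_D, of _ 1]) (use D_bounds in auto)
  have term_le: "(\<integral>\<omega>. (D i \<omega>)^2 * (D i \<omega>)^2 \<partial>M) + 2 * (\<integral>\<omega>. (D i \<omega>)^2 * (\<Sum>j\<in>{Suc i..<n}. (D j \<omega>)^2) \<partial>M)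
      \<le> 3 * (\<integral>\<omega>. (D i \<omega>)^2 \<partial>M)" if "i < n" for i
  proof -
    have "(\<integral>\<omega>. (D i \<omega>)^2 * (D i \<omega>)^2 \<partial>M) \<le> (\<integral>\<omega>. (D i \<omega>)^2 \<partial>M)"
      using D_bounds by (intro integral_mono[OF int_D4 int_D] mult_left_le) auto
    then show ?thesis
      using integral_square_increment_mult_tail_le[of t, OF t that] unfolding D_def by linarith
  qed
  have "(\<integral>\<omega>. (\<Sum>i<n. (D i \<omega>)^2)^2 \<partial>M)
      = (\<Sum>i<n. (\<integral>\<omega>. (D i \<omega>)^2 * (D i \<omega>)^2 \<partial>M) + 2 * (\<integral>\<omega>. (D i \<omega>)^2 * (\<Sum>j\<in>{Suc i..<n}. (D j \<omega>)^2) \<partial>M))"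
    unfolding square_sum_lessThan using int_tail int_D4 by (simp add: algebra_simps)
  also have "\<dots> \<le> (\<Sum>i<n. 3 * (\<integral>\<omega>. (D i \<omega>)^2 \<partial>M))"
    using term_le by (intro sum_mono) auto
  also have "\<dots> = 3 * ((\<integral>\<omega>. Y (t n) \<omega> * Y (t n) \<omega> \<partial>M) - (\<integral>\<omega>. Y (t 0) \<omega> * Y (t 0) \<omega> \<partial>M))"
    using integral_mult_square_increment[OF t(1) t(2), where h="\<lambda>_. 1" and B=1]
    unfolding D_def sum_distrib_left[symmetric]
    by (simp add: sum_lessThan_telescope[where f="\<lambda>i. (\<integral>\<omega>. Y (t i) \<omega> * Y (t i) \<omega> \<partial>M)"])
  also have "\<dots> \<le> 3" using integral_Y_square_bounds[OF t(1)[of n]] integral_Y_square_bounds[OF t(1)[of 0]]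
    unfolding right_diff_distrib by linarith
  finally show ?thesis unfolding D_def .
qed

lemma sum_integral_cube_increments_le:
  fixes t :: "nat \<Rightarrow> real" and m :: "'a \<Rightarrow> real" and K :: real
  assumes t: "\<And>i. 0 \<le> t i" "\<And>i. t i \<le> t (Suc i)"
    and m[measurable]: "m \<in> borel_measurable M" and m_range: "\<And>\<omega>. \<omega> \<in> space M \<Longrightarrow> 0 \<le> m \<omega> \<and> m \<omega> \<le> 1"
    and m_bound: "\<And>\<omega> i. \<omega> \<in> space M \<Longrightarrow> i < n \<Longrightarrow> \<bar>Y (t (Suc i)) \<omega> - Y (t i) \<omega>\<bar> \<le> m \<omega>"
    and K: "0 < K"
  shows "(\<Sum>i<n. \<integral>\<omega>. \<bar>Y (t (Suc i)) \<omega> - Y (t i) \<omega>\<bar>^3 \<partial>M) \<le> 3/K + K/4 * (\<integral>\<omega>. m \<omega> \<partial>M)"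
proof -
  define D where "D i \<omega> = Y (t (Suc i)) \<omega> - Y (t i) \<omega>" for i \<omega>
  define S where "S \<omega> = (\<Sum>i<n. (D i \<omega>)^2)" for \<omega>
  have [measurable]: "D i \<in> borel_measurable M" for i unfolding D_def using t by measurable
  have [measurable]: "S \<in> borel_measurable M" unfolding S_def by measurable
  have D_le: "\<bar>D i \<omega>\<bar> \<le> 1" if "\<omega> \<in> space M" for i \<omega>
    unfolding D_def using abs_Y_diff_le_1[OF that t(1) t(1)] .
  have int_D3: "integrable M (\<lambda>\<omega>. \<bar>D i \<omega>\<bar>^3)" for i
    by (rule integrable_bounded[where B=1]) (use D_le in \<open>auto simp: power_le_one\<close>)
  have int_S2: "integrable M (\<lambda>\<omega>. (S \<omega>)^2)"
  proof (rule integrable_bounded[where B="(real n)^2"])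
    fix \<omega> assume \<omega>: "\<omega> \<in> space M"
    have "S \<omega> \<le> (\<Sum>i<n. 1)" unfolding S_def using D_le[OF \<omega>] by (intro sum_mono) (simp add: abs_square_le_1)
    moreover have "0 \<le> S \<omega>" unfolding S_def by (intro sum_nonneg) simp
    ultimately show "\<bar>(S \<omega>)^2\<bar> \<le> (real n)^2" by (simp add: power_mono)
  qed measurable
  have int_m: "integrable M m" by (rule integrable_bounded[where B=1]) (use m_range in auto)
  have pointwise: "(\<Sum>i<n. \<bar>D i \<omega>\<bar>^3) \<le> (S \<omega>)^2 / K + K * m \<omega> / 4" if \<omega>: "\<omega> \<in> space M" for \<omega>
    unfolding S_def D_def using m_bound[OF \<omega>] m_range[OF \<omega>] K by (intro sum_abs_cube_le) auto
  have "(\<Sum>i<n. \<integral>\<omega>. \<bar>D i \<omega>\<bar>^3 \<partial>M) = (\<integral>\<omega>. (\<Sum>i<n. \<bar>D i \<omega>\<bar>^3) \<partial>M)"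
    by (simp add: Bochner_Integration.integral_sum int_D3)
  also have "\<dots> \<le> (\<integral>\<omega>. (S \<omega>)^2 / K + K * m \<omega> / 4 \<partial>M)"
    by (rule integral_mono) (use int_D3 int_S2 int_m pointwise in auto)
  also have "\<dots> = (\<integral>\<omega>. (S \<omega>)^2 \<partial>M) / K + K/4 * (\<integral>\<omega>. m \<omega> \<partial>M)"
    using int_S2 int_m by simp
  also have "(\<integral>\<omega>. (S \<omega>)^2 \<partial>M) \<le> 3"
    unfolding S_def D_def by (rule integral_square_sum_square_increments_le[of t, OF t])
  finally show ?thesis unfolding D_def using K by (simp add: divide_right_mono)
qed

definition max_grid_osc :: "real \<Rightarrow> nat \<Rightarrow> 'a \<Rightarrow> real" where
  "max_grid_osc \<tau> n \<omega> = Max ((\<lambda>i. osc (grid \<tau> n i) (grid \<tau> n (Suc i)) \<omega>) ` {..<n})"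

context
  fixes \<tau> :: real and n :: nat
  assumes \<tau>: "0 < \<tau>" and n: "0 < n"
begin

lemma max_grid_osc_measurable[measurable]: "max_grid_osc \<tau> n \<in> borel_measurable M"
  unfolding max_grid_osc_def using \<tau>
  by (intro borel_measurable_Max) (auto intro!: osc_measurable grid_nonneg grid_le_Suc)

lemma osc_le_max_grid_osc:
  "\<omega> \<in> space M \<Longrightarrow> i < n \<Longrightarrow> osc (grid \<tau> n i) (grid \<tau> n (Suc i)) \<omega> \<le> max_grid_osc \<tau> n \<omega>"
  unfolding max_grid_osc_def by (intro Max_ge) auto

lemma max_grid_osc_bounds:
  assumes \<omega>: "\<omega> \<in> space M"
  shows "0 \<le> max_grid_osc \<tau> n \<omega> \<and> max_grid_osc \<tau> n \<omega> \<le> 1"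
proof
  show "0 \<le> max_grid_osc \<tau> n \<omega>"
    using osc_le_max_grid_osc[OF \<omega> n] osc_nonneg[OF \<omega> grid_nonneg grid_le_Suc, of \<tau> n 0] \<tau> by simp
  show "max_grid_osc \<tau> n \<omega> \<le> 1"
    unfolding max_grid_osc_def using n \<tau> by (subst Max_le_iff) (auto intro!: osc_le_1[OF \<omega>] grid_nonneg grid_le_Suc)
qed

lemma abs_increment_le_max_grid_osc:
  assumes \<omega>: "\<omega> \<in> space M" and i: "i < n"
  shows "\<bar>Y (grid \<tau> n (Suc i)) \<omega> - Y (grid \<tau> n i) \<omega>\<bar> \<le> max_grid_osc \<tau> n \<omega>"
proof -
  have "grid \<tau> n i \<le> grid \<tau> n (Suc i)" using \<tau> by (simp add: grid_le_Suc)
  then have "\<bar>Y (grid \<tau> n (Suc i)) \<omega> - Y (grid \<tau> n i) \<omega>\<bar> \<le> osc (grid \<tau> n i) (grid \<tau> n (Suc i)) \<omega>"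
    using \<tau> by (intro abs_Y_diff_le_osc[OF \<omega>] grid_nonneg) auto
  then show ?thesis using osc_le_max_grid_osc[OF \<omega> i] by linarith
qed

end

lemma max_grid_osc_tendsto_0:
  assumes \<omega>: "\<omega> \<in> space M" and \<tau>: "0 < \<tau>"
  shows "(\<lambda>n. max_grid_osc \<tau> (Suc n) \<omega>) \<longlonglongrightarrow> 0"
proof (rule LIMSEQ_I)
  fix e :: real assume e: "0 < e"
  have "continuous_on {0..\<tau>} (\<lambda>t. Y t \<omega>)"
    using continuous_paths[OF \<omega>] by (rule continuous_on_subset) auto
  then have "uniformly_continuous_on {0..\<tau>} (\<lambda>t. Y t \<omega>)" by (rule compact_uniformly_continuous) simp
  then obtain d where d: "d > 0"
    and close: "\<And>x x'. x \<in> {0..\<tau>} \<Longrightarrow> x' \<in> {0..\<tau>} \<Longrightarrow> dist x' x < d \<Longrightarrow> dist (Y x' \<omega>) (Y x \<omega>) < e/2"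
    using e by (metis half_gt_zero uniformly_continuous_onE)
  obtain N :: nat where N: "\<tau> / d < N" using reals_Archimedean2 by blast
  have "norm (max_grid_osc \<tau> (Suc n) \<omega> - 0) < e" if "N \<le> n" for n
  proof -
    have mesh: "\<tau> / real (Suc n) < d" using N that d \<tau> by (simp add: field_simps) (smt (verit) of_nat_mono mult_left_mono)
    have "osc (grid \<tau> (Suc n) i) (grid \<tau> (Suc n) (Suc i)) \<omega> \<le> e/2" if i: "i < Suc n" for i
    proof (rule osc_le[OF \<omega> grid_nonneg grid_le_Suc])
      fix r assume r: "r \<in> {grid \<tau> (Suc n) i..grid \<tau> (Suc n) (Suc i)}"
      have "grid \<tau> (Suc n) i \<in> {0..\<tau>}" "r \<in> {0..\<tau>}"
        using r \<tau> i grid_nonneg[of \<tau> "Suc n" i] grid_le_Suc[of \<tau> "Suc n" i] grid_le[of \<tau> "Suc i" "Suc n"] by auto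
      moreover have "dist r (grid \<tau> (Suc n) i) < d"
        using r mesh grid_Suc_diff[of \<tau> "Suc n" i] by (auto simp: dist_real_def)
      ultimately show "\<bar>Y r \<omega> - Y (grid \<tau> (Suc n) i) \<omega>\<bar> \<le> e/2"
        using close by (fastforce simp: dist_real_def)
    qed (use \<tau> in auto)
    then have "max_grid_osc \<tau> (Suc n) \<omega> \<le> e/2" unfolding max_grid_osc_def by (subst Max_le_iff) auto
    then show ?thesis using max_grid_osc_bounds[OF \<tau> zero_less_Suc \<omega>] e by simp
  qed
  then show "\<exists>N. \<forall>n\<ge>N. norm (max_grid_osc \<tau> (Suc n) \<omega> - 0) < e" by blast
qed

lemma integral_max_grid_osc_tendsto_0:
  assumes \<tau>: "0 < \<tau>"
  shows "(\<lambda>n. \<integral>\<omega>. max_grid_osc \<tau> n \<omega> \<partial>M) \<longlonglongrightarrow> 0"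
proof -
  have "(\<lambda>n. \<integral>\<omega>. max_grid_osc \<tau> (Suc n) \<omega> \<partial>M) \<longlonglongrightarrow> (\<integral>\<omega>. 0 \<partial>M)"
    using max_grid_osc_bounds[OF \<tau> zero_less_Suc] max_grid_osc_tendsto_0[OF _ \<tau>]
    by (intro integral_dominated_convergence[where w="\<lambda>_. 1"] AE_I2) (auto simp: \<tau>)
  then show ?thesis by (simp add: LIMSEQ_imp_Suc)
qed

lemma grid_errors_le:
  fixes \<tau> lam K :: real and n :: nat
  assumes \<tau>: "0 < \<tau>" and n: "0 < n" and lam: "0 \<le> lam" and K: "0 < K"
  defines "t \<equiv> grid \<tau> n"
  shows "g * lam^2 / 2 * (\<tau> / n) * (\<Sum>i<n. \<integral>\<omega>. osc (t i) (t (Suc i)) \<omega> \<partial>M)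
      + lam^3/6 * (\<Sum>i<n. \<integral>\<omega>. \<bar>Y (t (Suc i)) \<omega> - Y (t i) \<omega>\<bar>^3 \<partial>M)
    \<le> (g * lam^2 / 2 * \<tau> + lam^3 / 24 * K) * (\<integral>\<omega>. max_grid_osc \<tau> n \<omega> \<partial>M) + lam^3 / (2 * K)"
proof -
  have t: "\<And>i. 0 \<le> t i" "\<And>i. t i \<le> t (Suc i)"
    unfolding t_def using \<tau> by (auto intro: grid_nonneg grid_le_Suc)
  have int_max: "integrable M (max_grid_osc \<tau> n)"
    by (rule integrable_bounded[where B=1]) (use max_grid_osc_bounds[OF \<tau> n] max_grid_osc_measurable[OF \<tau> n] in auto)
  have "(\<Sum>i<n. \<integral>\<omega>. osc (t i) (t (Suc i)) \<omega> \<partial>M) \<le> (\<Sum>i<n. \<integral>\<omega>. max_grid_osc \<tau> n \<omega> \<partial>M)"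
    using t osc_le_max_grid_osc[OF \<tau> n]
    by (intro sum_mono integral_mono[OF integrable_osc int_max]) (auto simp: t_def)
  then have "g * lam^2 / 2 * (\<tau> / n) * (\<Sum>i<n. \<integral>\<omega>. osc (t i) (t (Suc i)) \<omega> \<partial>M)
      \<le> g * lam^2 / 2 * (\<tau> / n) * (n * (\<integral>\<omega>. max_grid_osc \<tau> n \<omega> \<partial>M))"
    using rate_pos \<tau> by (intro mult_left_mono) auto
  also have "\<dots> = g * lam^2 / 2 * \<tau> * (\<integral>\<omega>. max_grid_osc \<tau> n \<omega> \<partial>M)" using n by simp
  finally have osc_term: "g * lam^2 / 2 * (\<tau> / n) * (\<Sum>i<n. \<integral>\<omega>. osc (t i) (t (Suc i)) \<omega> \<partial>M)
      \<le> g * lam^2 / 2 * \<tau> * (\<integral>\<omega>. max_grid_osc \<tau> n \<omega> \<partial>M)" .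
  moreover have "lam^3/6 * (\<Sum>i<n. \<integral>\<omega>. \<bar>Y (t (Suc i)) \<omega> - Y (t i) \<omega>\<bar>^3 \<partial>M)
      \<le> lam^3/6 * (3/K + K/4 * (\<integral>\<omega>. max_grid_osc \<tau> n \<omega> \<partial>M))"
    using lam max_grid_osc_measurable[OF \<tau> n] max_grid_osc_bounds[OF \<tau> n] abs_increment_le_max_grid_osc[OF \<tau> n]
    unfolding t_def
    by (intro mult_left_mono sum_integral_cube_increments_le[of "grid \<tau> n", OF t[unfolded t_def]] K) auto
  moreover have "lam^3/6 * (3/K + K/4 * (\<integral>\<omega>. max_grid_osc \<tau> n \<omega> \<partial>M))
      = lam^3 / 24 * K * (\<integral>\<omega>. max_grid_osc \<tau> n \<omega> \<partial>M) + lam^3 / (2 * K)"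
    using K by (simp add: field_simps)
  ultimately show ?thesis using osc_term unfolding distrib_right by linarith
qed

lemma laplace_lower_bound:
  fixes \<tau> lam a :: real
  assumes \<tau>: "0 < \<tau>" and lam: "0 < lam" and a: "0 < a" "a < 1"
  defines "\<theta>0 \<equiv> 1 / (1/lam + g * (1 - a) / 4 * \<tau>)"
  shows "exp (-\<theta>0 * y0) - y0 * (3/a) * exp (-a * \<theta>0) \<le> (\<integral>\<omega>. exp (-lam * Y \<tau> \<omega>) \<partial>M)"
proof (rule field_le_epsilon)
  fix e :: real assume e: "0 < e"
  define K where "K = lam^3 / e"
  have K: "0 < K" unfolding K_def using lam e by simp
  define C where "C = g * lam^2 / 2 * \<tau> + lam^3 / 24 * K"
  have C: "0 \<le> C" unfolding C_def using rate_pos lam \<tau> K by simp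
  define c where "c = g * (1 - a) / 4"
  have ev_small: "eventually (\<lambda>n. (\<integral>\<omega>. max_grid_osc \<tau> n \<omega> \<partial>M) < e / (2 * (C + 1))) sequentially"
    using order_tendstoD(2)[OF integral_max_grid_osc_tendsto_0[OF \<tau>]] e C by simp
  obtain N :: nat where "c * \<tau> * lam^2 + 1 \<le> N" using real_arch_simple by blast
  then have ev_large: "eventually (\<lambda>n. c * \<tau> * lam^2 + 1 \<le> real n) sequentially"
    unfolding eventually_sequentially by (intro exI[of _ N]) auto
  obtain n where small: "(\<integral>\<omega>. max_grid_osc \<tau> n \<omega> \<partial>M) < e / (2 * (C + 1))"
    and large: "c * \<tau> * lam^2 + 1 \<le> real n"
    using eventually_happens[OF eventually_conj[OF ev_small ev_large]] by auto
  have c: "0 < c" unfolding c_def using rate_pos a by simp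
  have "0 \<le> c * \<tau> * lam^2" using c \<tau> by simp
  then have n: "0 < n" using large by linarith
  have fine: "g * (1 - a) / 4 * (\<tau> / n) * lam^2 \<le> 1"
    using large n unfolding c_def[symmetric] by (simp add: field_simps)
  have "C * (\<integral>\<omega>. max_grid_osc \<tau> n \<omega> \<partial>M) \<le> e / 2"
  proof -
    have "0 \<le> (\<integral>\<omega>. max_grid_osc \<tau> n \<omega> \<partial>M)"
      using max_grid_osc_bounds[OF \<tau> n] by (intro integral_nonneg_AE AE_I2) auto
    then have "C * (\<integral>\<omega>. max_grid_osc \<tau> n \<omega> \<partial>M) \<le> (C + 1) * (e / (2 * (C + 1)))"
      using small C by (intro mult_mono) auto
    also have "\<dots> = e / 2" using C by (simp add: field_simps)
    finally show ?thesis .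
  qed
  moreover have "lam^3 / (2 * K) = e / 2" unfolding K_def using lam by simp
  moreover have "\<theta>0 = riccati_grid lam (g * (1 - a) / 4) \<tau> n 0" unfolding \<theta>0_def riccati_grid_def by simp
  ultimately show "exp (-\<theta>0 * y0) - y0 * (3/a) * exp (-a * \<theta>0) \<le> (\<integral>\<omega>. exp (-lam * Y \<tau> \<omega>) \<partial>M) + e"
    using laplace_grid_lower_bound[OF \<tau> n lam a fine] grid_errors_le[OF \<tau> n less_imp_le[OF lam] K]
    unfolding C_def by auto
qed

lemma exists_time_zero_with_positive_probability:
  assumes T: "0 < T"
  obtains \<tau> where "0 < \<tau>" "\<tau> \<le> T" "0 < measure M {\<omega> \<in> space M. Y \<tau> \<omega> = 0}"
proof -
  define a where "a = (1 + y0) / 2"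
  define b where "b = (a + y0) / 2"
  define c where "c = g * (1 - a) / 4"
  have a: "0 < a" "a < 1" and b: "y0 < b" "b < a" and c: "0 < c"
    unfolding a_def b_def c_def using initial_pos initial_less_one rate_pos by auto
  define \<tau> where "\<tau> = min T ((b - y0) / (3 * c))"
  have \<tau>: "0 < \<tau>" "\<tau> \<le> T" unfolding \<tau>_def using T b c by auto
  define \<Theta> where "\<Theta> = 1 / (c * \<tau>)"
  have \<Theta>: "0 < \<Theta>" "3 \<le> (b - y0) * \<Theta>"
    using c \<tau> b unfolding \<Theta>_def \<tau>_def by (auto simp: field_simps min_def)
  have bound: "exp (-\<Theta> * y0) / 2 \<le> (\<integral>\<omega>. exp (-lam * Y \<tau> \<omega>) \<partial>M)" if lam: "\<Theta> * b / (a - b) \<le> lam" for lam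
  proof -
    define \<Lambda> where "\<Lambda> = \<Theta> * b / (a - b)"
    have \<Lambda>: "0 < \<Lambda>" unfolding \<Lambda>_def using \<Theta> b initial_pos by simp
    have lam_pos: "0 < lam" using lam \<Lambda> unfolding \<Lambda>_def by linarith
    define \<theta> where "\<theta> = 1 / (1/lam + g * (1 - a) / 4 * \<tau>)"
    have \<theta>_eq: "\<theta> = 1 / (1/lam + 1/\<Theta>)" unfolding \<theta>_def \<Theta>_def c_def[symmetric] by simp
    have "1/lam \<le> 1/\<Lambda>" using lam \<Lambda> unfolding \<Lambda>_def[symmetric] by (simp add: frac_le)
    also have "1/\<Lambda> = a / (b * \<Theta>) - 1/\<Theta>" unfolding \<Lambda>_def using b \<Theta> initial_pos by (simp add: field_simps)
    finally have "1/lam + 1/\<Theta> \<le> a / (b * \<Theta>)" by linarith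
    moreover have "0 < 1/lam + 1/\<Theta>" using lam_pos \<Theta>(1) by (intro add_pos_pos) simp_all
    ultimately have "1 / (a / (b * \<Theta>)) \<le> \<theta>" unfolding \<theta>_eq by (intro frac_le) auto
    then have "b * \<Theta> / a \<le> \<theta>" by simp
    moreover have "\<theta> \<le> \<Theta>"
      unfolding \<theta>_eq using frac_le[of 1 1 "1/\<Theta>" "1/lam + 1/\<Theta>"] lam_pos \<Theta>(1) by simp
    ultimately show ?thesis
      using exp_penalty_le_half[OF initial_pos b(1) b(2) a(2) \<Theta>(2)] laplace_lower_bound[OF \<tau>(1) lam_pos a]
      unfolding \<theta>_def by (meson order.trans)
  qed
  have "(\<lambda>j. \<integral>\<omega>. exp (- real j * Y \<tau> \<omega>) \<partial>M) \<longlonglongrightarrow> measure M {\<omega> \<in> space M. Y \<tau> \<omega> = 0}"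
    using \<tau> range by (intro tendsto_integral_exp_neg_mult) auto
  then have "exp (-\<Theta> * y0) / 2 \<le> measure M {\<omega> \<in> space M. Y \<tau> \<omega> = 0}"
  proof (rule LIMSEQ_le_const)
    obtain N :: nat where "\<Theta> * b / (a - b) \<le> N" using real_arch_simple by blast
    then show "\<exists>N. \<forall>j\<ge>N. exp (-\<Theta> * y0) / 2 \<le> (\<integral>\<omega>. exp (- real j * Y \<tau> \<omega>) \<partial>M)"
      by (intro exI[of _ N] allI impI bound) simp
  qed
  moreover have "0 < exp (-\<Theta> * y0) / 2" by simp
  ultimately show ?thesis using that[OF \<tau>] by linarith
qed

lemma hits_zero_iff_rational_approach:
  assumes \<omega>: "\<omega> \<in> space M" and T: "0 < T"
  shows "(\<exists>t\<in>{0..T}. Y t \<omega> = 0) \<longleftrightarrow> (\<forall>m::nat. \<exists>q\<in>{0..T} \<inter> \<rat>. Y q \<omega> < 1 / Suc m)"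
proof
  have cont: "continuous_on {0..T} (\<lambda>r. Y r \<omega>)"
    using continuous_paths[OF \<omega>] by (rule continuous_on_subset) auto
  assume "\<exists>t\<in>{0..T}. Y t \<omega> = 0"
  then obtain t where t: "t \<in> {0..T}" "Y t \<omega> = 0" by blast
  show "\<forall>m::nat. \<exists>q\<in>{0..T} \<inter> \<rat>. Y q \<omega> < 1 / Suc m"
  proof (rule allI, rule ccontr)
    fix m :: nat
    assume "\<not> (\<exists>q\<in>{0..T} \<inter> \<rat>. Y q \<omega> < 1 / Suc m)"
    then have "- Y q \<omega> \<le> - (1 / Suc m)" if "q \<in> {0..T} \<inter> \<rat>" for q using that by force
    then have "- Y t \<omega> \<le> - (1 / Suc m)"
      using continuous_on_le_if_le_on_rationals[OF T continuous_on_minus[OF cont] _ t(1)] by blast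
    then show False using t(2) by simp
  qed
next
  assume approach: "\<forall>m::nat. \<exists>q\<in>{0..T} \<inter> \<rat>. Y q \<omega> < 1 / Suc m"
  have "continuous_on {0..T} (\<lambda>r. Y r \<omega>)"
    using continuous_paths[OF \<omega>] by (rule continuous_on_subset) auto
  then obtain t where t: "t \<in> {0..T}" and min: "\<And>r. r \<in> {0..T} \<Longrightarrow> Y t \<omega> \<le> Y r \<omega>"
    using continuous_attains_inf[OF compact_Icc] T by (metis atLeastAtMost_iff less_imp_le order_refl empty_iff)
  have "Y t \<omega> = 0"
  proof (rule ccontr)
    assume "Y t \<omega> \<noteq> 0"
    then have "0 < Y t \<omega>" using range[OF \<omega>, of t] t by auto
    then obtain m :: nat where m: "inverse (Suc m) < Y t \<omega>" using reals_Archimedean by blast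
    obtain q where "q \<in> {0..T} \<inter> \<rat>" "Y q \<omega> < 1 / Suc m" using approach by blast
    then show False using min[of q] m by (simp add: inverse_eq_divide)
  qed
  then show "\<exists>t\<in>{0..T}. Y t \<omega> = 0" using t by blast
qed

lemma hitting_zero_sets:
  assumes T: "0 < T"
  shows "{\<omega> \<in> space M. \<exists>t\<in>{0..T}. Y t \<omega> = 0} \<in> sets M"
proof -
  have "{\<omega> \<in> space M. \<exists>t\<in>{0..T}. Y t \<omega> = 0}
      = {\<omega> \<in> space M. \<forall>m::nat. \<exists>q\<in>{0..T} \<inter> \<rat>. Y q \<omega> < 1 / Suc m}"
    using hits_zero_iff_rational_approach[OF _ T] by blast
  also have "\<dots> \<in> sets M"
  proof (intro sets.sets_Collect_countable_All sets.sets_Collect_countable_Ex')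
    show "countable ({0..T} \<inter> \<rat>)" by (simp add: countable_Int2 countable_rat)
    fix m :: nat and q assume "q \<in> {0..T} \<inter> \<rat>"
    then have [measurable]: "Y q \<in> borel_measurable M" by auto
    show "{\<omega> \<in> space M. Y q \<omega> < 1 / Suc m} \<in> sets M" by measurable
  qed
  finally show ?thesis .
qed

theorem hits_zero_with_positive_probability:
  assumes T: "0 < T"
  shows "0 < measure M {\<omega> \<in> space M. \<exists>t\<in>{0..T}. Y t \<omega> = 0}"
proof -
  obtain \<tau> where \<tau>: "0 < \<tau>" "\<tau> \<le> T" and pos: "0 < measure M {\<omega> \<in> space M. Y \<tau> \<omega> = 0}"
    using exists_time_zero_with_positive_probability[OF T] .
  have "measure M {\<omega> \<in> space M. Y \<tau> \<omega> = 0} \<le> measure M {\<omega> \<in> space M. \<exists>t\<in>{0..T}. Y t \<omega> = 0}"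
    using \<tau> by (intro finite_measure_mono hitting_zero_sets[OF T]) auto
  then show ?thesis using pos by linarith
qed

end

section \<open>Coordinates of the simplex diffusion\<close>

lemma unit_simplex_component_bounds:
  assumes "x \<in> unit_simplex"
  shows "0 \<le> x $ i" "x $ i \<le> 1"
proof -
  have nonneg: "\<And>i. 0 \<le> x $ i" and sum: "(\<Sum>i\<in>UNIV. x $ i) = 1"
    using assms unfolding unit_simplex_def by auto
  show "0 \<le> x $ i" by (rule nonneg)
  have "x $ i \<le> (\<Sum>i\<in>UNIV. x $ i)" by (rule member_le_sum) (use nonneg in auto)
  then show "x $ i \<le> 1" using sum by simp
qed

lemma unit_simplex_sum_remove:
  "x \<in> unit_simplex \<Longrightarrow> (\<Sum>l\<in>UNIV - {k}. x $ l) = 1 - x $ k"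
  unfolding unit_simplex_def by (simp add: sum_diff1)

lemma UNIV_remove_nonempty:
  assumes "CARD('n::finite) \<ge> 2"
  shows "(UNIV :: 'n set) - {k} \<noteq> {}"
proof
  assume "UNIV - {k} = {}"
  then have "CARD('n) = card {k}" by (metis Diff_eq_empty_iff subset_antisym subset_UNIV)
  with assms show False by simp
qed

lemma unit_simplex_interior_component_less_1:
  fixes x :: "real ^ 'n"
  assumes "CARD('n) \<ge> 2" and x: "x \<in> unit_simplex_interior"
  shows "x $ k < 1"
proof -
  have "0 < (\<Sum>l\<in>UNIV - {k}. x $ l)"
    using x UNIV_remove_nonempty[OF assms(1)] unfolding unit_simplex_interior_def by (intro sum_pos) auto
  moreover have "x \<in> unit_simplex"
    using x unfolding unit_simplex_interior_def unit_simplex_def by (auto intro: less_imp_le)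
  ultimately show ?thesis using unit_simplex_sum_remove by fastforce
qed

lemma simplex_diffusion_diagonal_ge:
  assumes x: "x \<in> unit_simplex" and g: "\<And>l. l \<noteq> k \<Longrightarrow> g \<le> \<gamma> k l"
  shows "g * (x $ k * (1 - x $ k)) \<le> simplex_diffusion \<gamma> x k k"
proof -
  have "g * (x $ k * (1 - x $ k)) = (\<Sum>l\<in>UNIV - {k}. g * x $ k * x $ l)"
    using unit_simplex_sum_remove[OF x, of k] by (simp add: sum_distrib_left[symmetric] mult.assoc)
  also have "\<dots> \<le> (\<Sum>l\<in>UNIV - {k}. \<gamma> k l * x $ k * x $ l)"
    using g unit_simplex_component_bounds(1)[OF x] by (intro sum_mono mult_right_mono) auto
  finally show ?thesis unfolding simplex_diffusion_def by simp
qed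

lemma integral_increment_ge:
  fixes f :: "real \<Rightarrow> real"
  assumes f: "continuous_on {0..} f" and st: "0 \<le> s" "s \<le> t" and m: "\<And>r. r \<in> {s..t} \<Longrightarrow> m \<le> f r"
  shows "(t - s) * m \<le> integral {0..t} f - integral {0..s} f"
proof -
  have int: "f integrable_on {a..b}" if "0 \<le> a" for a b
    using that by (intro integrable_continuous_interval continuous_on_subset[OF f]) auto
  have "integral {0..t} f - integral {0..s} f = integral {s..t} f"
    using Henstock_Kurzweil_Integration.integral_combine[OF st int] by simp
  moreover have "integral {s..t} (\<lambda>_. m) \<le> integral {s..t} f"
    using m st by (intro integral_le int) auto
  ultimately show ?thesis using st by (simp add: algebra_simps)
qed

lemma simplex_diffusion_integral_increment_ge:
  fixes X :: "real \<Rightarrow> real ^ 'n"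
  assumes X: "continuous_on {0..} X" and in_simplex: "\<And>t. 0 \<le> t \<Longrightarrow> X t \<in> unit_simplex"
    and g: "0 \<le> g" "\<And>l. l \<noteq> k \<Longrightarrow> g \<le> \<gamma> k l" and st: "0 \<le> s" "s \<le> t"
    and L: "\<And>r. r \<in> {s..t} \<Longrightarrow> L \<le> X r $ k * (1 - X r $ k)"
  shows "g * (t - s) * L \<le> integral {0..t} (\<lambda>r. simplex_diffusion \<gamma> (X r) k k)
    - integral {0..s} (\<lambda>r. simplex_diffusion \<gamma> (X r) k k)"
proof -
  have "continuous_on {0..} (\<lambda>r. simplex_diffusion \<gamma> (X r) k k)"
    unfolding simplex_diffusion_def if_P[OF refl] by (intro continuous_intros continuous_on_component X)
  moreover have "g * L \<le> simplex_diffusion \<gamma> (X r) k k" if r: "r \<in> {s..t}" for r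
  proof -
    have "g * L \<le> g * (X r $ k * (1 - X r $ k))" using mult_left_mono[OF L[OF r] g(1)] .
    also have "\<dots> \<le> simplex_diffusion \<gamma> (X r) k k"
      using r st by (intro simplex_diffusion_diagonal_ge in_simplex g(2)) auto
    finally show ?thesis .
  qed
  ultimately have "(t - s) * (g * L) \<le> integral {0..t} (\<lambda>r. simplex_diffusion \<gamma> (X r) k k)
      - integral {0..s} (\<lambda>r. simplex_diffusion \<gamma> (X r) k k)"
    by (rule integral_increment_ge[OF _ st])
  then show ?thesis by (simp add: mult_ac)
qed

lemma simplex_coordinate_wright_fisher_type:
  fixes \<gamma> :: "'n::finite \<Rightarrow> 'n \<Rightarrow> real" and X :: "real \<Rightarrow> 'a \<Rightarrow> real ^ 'n"
  assumes card: "CARD('n) \<ge> 2" and \<gamma>: "\<And>i j. i \<noteq> j \<Longrightarrow> \<gamma> i j > 0"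
    and X: "is_simplex_diffusion_martingale M F \<gamma> X"
    and \<mu>0: "\<mu>0 \<in> unit_simplex_interior" and X0: "\<And>\<omega>. \<omega> \<in> space M \<Longrightarrow> X 0 \<omega> = \<mu>0"
  shows "wright_fisher_type_martingale M F (\<lambda>t \<omega>. X t \<omega> $ k)
    (\<lambda>t \<omega>. integral {0..t} (\<lambda>s. simplex_diffusion \<gamma> (X s \<omega>) k k)) (\<mu>0 $ k) (Min (\<gamma> k ` (UNIV - {k})))"
proof -
  let ?g = "Min (\<gamma> k ` (UNIV - {k}))"
  have paths: "\<And>\<omega>. \<omega> \<in> space M \<Longrightarrow> continuous_on {0..} (\<lambda>t. X t \<omega>)"
    and in_simplex: "\<And>\<omega> t. \<omega> \<in> space M \<Longrightarrow> 0 \<le> t \<Longrightarrow> X t \<omega> \<in> unit_simplex"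
    using X unfolding is_simplex_diffusion_martingale_def by auto
  have g_pos: "0 < ?g" and g_le: "\<And>l. l \<noteq> k \<Longrightarrow> ?g \<le> \<gamma> k l"
    using \<gamma> UNIV_remove_nonempty[OF card] by (auto simp: Min_gr_iff)
  show ?thesis
  proof (rule wright_fisher_type_martingale.intro)
    show "prob_space M" "is_filtration M F" "is_martingale M F (\<lambda>t \<omega>. X t \<omega> $ k)"
      "is_martingale M F (\<lambda>t \<omega>. X t \<omega> $ k * X t \<omega> $ k
         - integral {0..t} (\<lambda>s. simplex_diffusion \<gamma> (X s \<omega>) k k))"
      using X unfolding is_simplex_diffusion_martingale_def by auto
    show "0 \<le> X t \<omega> $ k \<and> X t \<omega> $ k \<le> 1" if "\<omega> \<in> space M" "0 \<le> t" for \<omega> t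
      using unit_simplex_component_bounds[OF in_simplex[OF that]] by simp
    show "continuous_on {0..} (\<lambda>t. X t \<omega> $ k)" if "\<omega> \<in> space M" for \<omega>
      using paths[OF that] by (rule continuous_on_component)
    show "X 0 \<omega> $ k = \<mu>0 $ k" if "\<omega> \<in> space M" for \<omega> using X0[OF that] by simp
    show "0 < ?g" by (rule g_pos)
    show "0 < \<mu>0 $ k" using \<mu>0 unfolding unit_simplex_interior_def by simp
    show "\<mu>0 $ k < 1" by (rule unit_simplex_interior_component_less_1[OF card \<mu>0])
  next
    fix \<omega> s t L
    assume "\<omega> \<in> space M" "0 \<le> s" "s \<le> t" "\<And>r. r \<in> {s..t} \<Longrightarrow> L \<le> X r \<omega> $ k * (1 - X r \<omega> $ k)"
    then show "?g * (t - s) * L \<le> integral {0..t} (\<lambda>r. simplex_diffusion \<gamma> (X r \<omega>) k k)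
        - integral {0..s} (\<lambda>r. simplex_diffusion \<gamma> (X r \<omega>) k k)"
      using paths in_simplex g_pos g_le by (intro simplex_diffusion_integral_increment_ge) auto
  qed
qed

theorem mainTheorem11:
  fixes \<gamma> :: "'n::finite \<Rightarrow> 'n \<Rightarrow> real"
    and M :: "'a measure" and F :: "real \<Rightarrow> 'a measure"
    and X :: "real \<Rightarrow> 'a \<Rightarrow> real ^ 'n"
    and \<mu>0 :: "real ^ 'n" and T :: real and k :: 'n
  assumes "CARD('n) \<ge> 2"
    and "\<And>i j. \<gamma> i j = \<gamma> j i"
    and "\<And>i. \<gamma> i i = 0"
    and "\<And>i j. i \<noteq> j \<Longrightarrow> \<gamma> i j > 0"
    and "is_simplex_diffusion_martingale M F \<gamma> X"
    and "\<mu>0 \<in> unit_simplex_interior"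
    and "\<And>\<omega>. \<omega> \<in> space M \<Longrightarrow> X 0 \<omega> = \<mu>0"
    and "T > 0"
  shows "measure M {\<omega> \<in> space M. \<exists>t\<in>{0..T}. X t \<omega> $ k = 0} > 0"
proof -
  interpret wright_fisher_type_martingale M F "\<lambda>t \<omega>. X t \<omega> $ k"
    "\<lambda>t \<omega>. integral {0..t} (\<lambda>s. simplex_diffusion \<gamma> (X s \<omega>) k k)" "\<mu>0 $ k" "Min (\<gamma> k ` (UNIV - {k}))"
    by (rule simplex_coordinate_wright_fisher_type[OF assms(1,4-7)])
  show ?thesis using hits_zero_with_positive_probability[OF assms(8)] .
qed

end
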